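(* Let $N=2^L$ with $L$ a positive integer, let $D_1,\ldots,D_N,R$ be positive integers, and let $\mathcal{W}_{\mathrm{TN}}\in\mathbb{R}^{D_1\times\cdots\times D_N}$ be any tensor generated by the locally connected tensor network of width $R$ (defined in the context). Let $\mathcal{A}\in\mathbb{R}^{D_1\times\cdots\times D_N}$ and $\epsilon\in[0,\|\mathcal{A}\|/4]$. If $\|\mathcal{W}_{\mathrm{TN}}-\mathcal{A}\|\le\epsilon$, then for every canonical partition $(\mathcal{K},\mathcal{K}^c)\in\mathcal{C}_N$: $$\mathrm{QE}(\mathcal{A};\mathcal{K})\le \ln(R)+\frac{2\epsilon}{\|\mathcal{A}\|}\ln(D_{\mathcal{K}})+2\sqrt{\frac{2\epsilon}{\|\mathcal{A}\|}}$$ (with the convention that $\epsilon/\|\mathcal{A}\|=0$ if $\mathcal{A}=0$, in which case $\epsilon=0$). In contrast, there exists $\mathcal{A}'\in\mathbb{R}^{D_1\times\cdots\times D_N}$ such that for all canonical partitions $(\mathcal{K},\mathcal{K}^c)\in\mathcal{C}_N$: $$\mathrm{QE}(\mathcal{A}';\mathcal{K})\ge\min\{|\mathcal{K}|,|\mathcal{K}^c|\}\cdot\ln\big(\min_{n\in[N]}D_n\big).$$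
   Context: $[N]=\{1,\ldots,N\}$; norms are Frobenius (Euclidean) norms. For a tensor $\mathcal{A}\in\mathbb{R}^{D_1\times\cdots\times D_N}$ and $\mathcal{K}\subseteq[N]$, $\mathcal{K}^c=[N]\setminus\mathcal{K}$, $[\![\mathcal{A};\mathcal{K}]\!]$ is the matrix arrangement of $\mathcal{A}$ with rows indexed by the axes in $\mathcal{K}$ and columns by the axes in $\mathcal{K}^c$, and $D_{\mathcal{K}}:=\min\{\prod_{n\in\mathcal{K}}D_n,\prod_{n\in\mathcal{K}^c}D_n\}$. The quantum entanglement is $\mathrm{QE}(\mathcal{A};\mathcal{K}):=-\sum_{d=1}^{D_{\mathcal{K}}}\rho_d\ln\rho_d$ where $\rho_d=\sigma_d^2/\sum_{d'}\sigma_{d'}^2$ and $\sigma_1\ge\cdots\ge\sigma_{D_{\mathcal{K}}}$ are the singular values of $[\![\mathcal{A};\mathcal{K}]\!]$; by convention $\mathrm{QE}(0;\mathcal{K})=0$. The canonical partitions $\mathcal{C}_N$ are the pairs $(\mathcal{K},\mathcal{K}^c)$ with $\mathcal{K}=\{2^{L-l}(n-1)+1,\ldots,2^{L-l}n\}$ for $l\in\{0,\ldots,L\}$, $n\in[2^l]$. The locally connected tensor network of width $R$ is a tensor network whose graph is a perfect binary tree with $N$ leaves, the open edge at the $n$-th leaf (left to right) having dimension $D_n$ and all inner edges having dimension $R$; the tensors it generates are exactly those of the form: choose vectors $\phi^{(0,n)}_r\in\mathbb{R}^{D_n}$ ($n\in[N]$, $r\in[R]$); for $l=1,\ldots,L-1$,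 $n\in[2^{L-l}]$, $r\in[R]$ set $\phi^{(l,n)}_r=\sum_{i,j\in[R]}a^{(l,n)}_{r,i,j}\,\phi^{(l-1,2n-1)}_i\otimes\phi^{(l-1,2n)}_j$ with arbitrary real coefficients; and $\mathcal{W}_{\mathrm{TN}}=\sum_{i,j\in[R]}a_{i,j}\,\phi^{(L-1,1)}_i\otimes\phi^{(L-1,2)}_j$. *)

theory Defs
  imports Complex_Main "HOL-Library.FuncSet"
begin

text \<open>A tensor in R^(D_1 x ... x D_N) is represented as a real-valued function on
index tuples i :: nat \<Rightarrow> nat, where the axis n ranges over {1..N} and i n < D n.
Only the values on tidx N D matter.\<close>

type_synonym tensor = "(nat \<Rightarrow> nat) \<Rightarrow> real"

definition tidx :: "nat \<Rightarrow> (nat \<Rightarrow> nat) \<Rightarrow> (nat \<Rightarrow> nat) set" where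
  "tidx N D = PiE {1..N} (\<lambda>n. {..<D n})"

definition fnorm :: "nat \<Rightarrow> (nat \<Rightarrow> nat) \<Rightarrow> tensor \<Rightarrow> real" where
  "fnorm N D A = sqrt (\<Sum>i\<in>tidx N D. (A i)^2)"

definition rowidx :: "(nat \<Rightarrow> nat) \<Rightarrow> nat set \<Rightarrow> (nat \<Rightarrow> nat) set" where
  "rowidx D K = PiE K (\<lambda>n. {..<D n})"

definition merge_idx :: "nat set \<Rightarrow> (nat \<Rightarrow> nat) \<Rightarrow> (nat \<Rightarrow> nat) \<Rightarrow> (nat \<Rightarrow> nat)" where
  "merge_idx K r c = (\<lambda>n. if n \<in> K then r n else c n)"

definition matricize :: "nat set \<Rightarrow> tensor \<Rightarrow> (nat \<Rightarrow> nat) \<Rightarrow> (nat \<Rightarrow> nat) \<Rightarrow> real" where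
  "matricize K A r c = A (merge_idx K r c)"

definition DK :: "nat \<Rightarrow> (nat \<Rightarrow> nat) \<Rightarrow> nat set \<Rightarrow> nat" where
  "DK N D K = min (\<Prod>n\<in>K. D n) (\<Prod>n\<in>{1..N} - K. D n)"

definition is_singvals :: "nat \<Rightarrow> (nat \<Rightarrow> nat) \<Rightarrow> nat set \<Rightarrow> tensor \<Rightarrow> (nat \<Rightarrow> real) \<Rightarrow> bool" where
  "is_singvals N D K A \<sigma> \<longleftrightarrow>
     (\<forall>d\<in>{1..DK N D K}. \<sigma> d \<ge> 0) \<and>
     (\<forall>d\<in>{1..<DK N D K}. \<sigma> (Suc d) \<le> \<sigma> d) \<and>
     (\<exists>u v. (\<forall>d\<in>{1..DK N D K}. \<forall>d'\<in>{1..DK N D K}.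
                 (\<Sum>r\<in>rowidx D K. u d r * u d' r) = (if d = d' then 1 else 0) \<and>
                 (\<Sum>c\<in>rowidx D ({1..N} - K). v d c * v d' c) = (if d = d' then 1 else 0)) \<and>
            (\<forall>r\<in>rowidx D K. \<forall>c\<in>rowidx D ({1..N} - K).
                 matricize K A r c = (\<Sum>d\<in>{1..DK N D K}. \<sigma> d * u d r * v d c)))"

definition singvals :: "nat \<Rightarrow> (nat \<Rightarrow> nat) \<Rightarrow> nat set \<Rightarrow> tensor \<Rightarrow> nat \<Rightarrow> real" where
  "singvals N D K A = (SOME \<sigma>. is_singvals N D K A \<sigma>)"

text \<open>Quantum entanglement; QE(0;K) = 0 by convention (the sum of squared singular values
vanishes iff A = 0). Note ln 0 = 0 in Isabelle, so 0 ln 0 = 0.\<close>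

definition QE :: "nat \<Rightarrow> (nat \<Rightarrow> nat) \<Rightarrow> tensor \<Rightarrow> nat set \<Rightarrow> real" where
  "QE N D A K =
    (let \<sigma> = singvals N D K A;
         s = (\<Sum>d\<in>{1..DK N D K}. (\<sigma> d)^2)
     in if s = 0 then 0
        else - (\<Sum>d\<in>{1..DK N D K}. ((\<sigma> d)^2 / s) * ln ((\<sigma> d)^2 / s)))"

text \<open>Canonical partitions of [2^L]: the set K (its complement is {1..2^L} - K).\<close>

definition canonical :: "nat \<Rightarrow> nat set set" where
  "canonical L = {K. \<exists>l\<le>L. \<exists>n\<in>{1..2^l}. K = {2^(L-l)*(n-1)+1 .. 2^(L-l)*n}}"

text \<open>Locally connected tensor network. tn_node phi0 a R l n r is the tensor phi^(l,n)_r,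
which depends only on the leaves {2^l (n-1)+1 .. 2^l n}; the product of tensors on disjoint
leaf sets is their outer product.\<close>

primrec tn_node :: "(nat \<Rightarrow> nat \<Rightarrow> nat \<Rightarrow> real) \<Rightarrow> (nat \<Rightarrow> nat \<Rightarrow> nat \<Rightarrow> nat \<Rightarrow> nat \<Rightarrow> real)
                    \<Rightarrow> nat \<Rightarrow> nat \<Rightarrow> nat \<Rightarrow> nat \<Rightarrow> tensor" where
  "tn_node phi0 a R 0 n r = (\<lambda>i. phi0 n r (i n))"
| "tn_node phi0 a R (Suc l) n r =
     (\<lambda>i. \<Sum>p\<in>{1..R}. \<Sum>q\<in>{1..R}.
            a (Suc l) n r p q * tn_node phi0 a R l (2*n-1) p i * tn_node phi0 a R l (2*n) q i)"

definition is_lctn :: "nat \<Rightarrow> (nat \<Rightarrow> nat) \<Rightarrow> nat \<Rightarrow> tensor \<Rightarrow> bool" where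
  "is_lctn L D R W \<longleftrightarrow>
     (\<exists>phi0 a atop. \<forall>i\<in>tidx (2^L) D.
        W i = (\<Sum>p\<in>{1..R}. \<Sum>q\<in>{1..R}.
                 atop p q * tn_node phi0 a R (L-1) 1 p i * tn_node phi0 a R (L-1) 2 q i))"

end

theory Submission
  imports Defs "HOL-Analysis.Analysis" "HOL-Library.Function_Algebras"
begin

text \<open>
  For a canonical partition \<open>K\<close> the tree contracts all leaves of \<open>K\<close> into a single inner
  edge of width \<open>R\<close>, so the matricization of \<open>W\<close> along \<open>K\<close> has rank at most \<open>R\<close>. By the
  Eckart--Young inequality the squared singular values of \<open>A\<close> beyond the \<open>R\<close>-th then sum to at
  most \<open>\<parallel>W - A\<parallel>\<^sup>2 \<le> \<epsilon>\<^sup>2\<close>: the normalized spectrum of \<open>A\<close> has mass at most \<open>x\<^sup>2/4\<close>,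
  \<open>x = 2\<epsilon>/\<parallel>A\<parallel>\<close>, outside its \<open>R\<close> leading entries, and splitting its entropy into head and tail
  gives the upper bound. Singular value decompositions are constructed variationally, by repeatedly
  maximizing the bilinear form over unit vectors orthogonal to the singular vectors already found.

  For the lower bound, pair axis \<open>j\<close> with axis \<open>j + N/2\<close> and require both indices to agree and
  to lie below \<open>m = min D\<^sub>n\<close>. A canonical \<open>K \<noteq> [N]\<close> lies in one half, so the matricization has
  at most one nonzero entry per column and \<open>m\<^bsup>|K|\<^esup>\<close> nonzero rows of equal norm; hence every
  normalized squared singular value is at most \<open>m\<^bsup>-|K|\<^esup>\<close>, and the entropy is at least
  \<open>|K| ln m\<close>.
\<close>

section \<open>Finitely supported real vectors\<close>

interpretation fun_space: vector_space "(\<lambda>(c::real) (f::'a\<Rightarrow>real). (\<lambda>x. c * f x))"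
  by unfold_locales (auto simp: fun_eq_iff algebra_simps)

definition inner_on :: "'a set \<Rightarrow> ('a \<Rightarrow> real) \<Rightarrow> ('a \<Rightarrow> real) \<Rightarrow> real" where
  "inner_on I x y = (\<Sum>r\<in>I. x r * y r)"

definition supported_on :: "'a set \<Rightarrow> ('a \<Rightarrow> real) \<Rightarrow> bool" where
  "supported_on I x \<longleftrightarrow> (\<forall>r. r \<notin> I \<longrightarrow> x r = 0)"

definition orthonormal_on :: "'a set \<Rightarrow> 'b set \<Rightarrow> ('b \<Rightarrow> 'a \<Rightarrow> real) \<Rightarrow> bool" where
  "orthonormal_on I D u \<longleftrightarrow>
     (\<forall>d\<in>D. \<forall>d'\<in>D. inner_on I (u d) (u d') = (if d = d' then 1 else 0))"

lemma orthonormal_onD: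
  "orthonormal_on I D u \<Longrightarrow> d \<in> D \<Longrightarrow> d' \<in> D \<Longrightarrow> inner_on I (u d) (u d') = (if d = d' then 1 else 0)"
  unfolding orthonormal_on_def by blast

lemma orthonormal_on_subset: "orthonormal_on I D u \<Longrightarrow> D' \<subseteq> D \<Longrightarrow> orthonormal_on I D' u"
  unfolding orthonormal_on_def by blast

lemma sum_apply: "(sum f A) x = (\<Sum>a\<in>A. f a x)" for f :: "'b \<Rightarrow> 'a \<Rightarrow> real"
  by (induction A rule: infinite_finite_induct) auto

lemma sum_kronecker:
  assumes "finite D" "d' \<in> D" "\<And>d. d \<in> D \<Longrightarrow> K d = (if d = d' then 1 else 0)"
  shows "(\<Sum>d\<in>D. f d * K d) = (f d' :: real)"
proof -
  have "(\<Sum>d\<in>D. f d * K d) = (\<Sum>d\<in>D. if d = d' then f d else 0)"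
    by (rule sum.cong) (use assms(3) in auto)
  also have "\<dots> = f d'" using assms(1,2) by simp
  finally show ?thesis .
qed

lemma inner_on_commute: "inner_on I x y = inner_on I y x"
  unfolding inner_on_def by (simp add: mult.commute)

lemma inner_on_self_nonneg: "inner_on I x x \<ge> 0"
  unfolding inner_on_def by (simp add: sum_nonneg)

lemma inner_on_cong:
  "(\<And>r. r \<in> I \<Longrightarrow> x r = x' r) \<Longrightarrow> (\<And>r. r \<in> I \<Longrightarrow> y r = y' r) \<Longrightarrow> inner_on I x y = inner_on I x' y'"
  unfolding inner_on_def by (auto intro!: sum.cong)

lemma inner_on_scale_left: "inner_on I (\<lambda>r. c * x r) y = c * inner_on I x y"
  unfolding inner_on_def by (simp add: sum_distrib_left algebra_simps)

lemma inner_on_scale_right: "inner_on I x (\<lambda>r. c * y r) = c * inner_on I x y"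
  unfolding inner_on_def by (simp add: sum_distrib_left algebra_simps)

lemma inner_on_lincomb_left: "inner_on J (\<lambda>c. \<Sum>d\<in>D. g d * f d c) y = (\<Sum>d\<in>D. g d * inner_on J (f d) y)"
  unfolding inner_on_def by (simp add: sum_distrib_right sum_distrib_left sum.swap[of _ J] mult.assoc)

lemma inner_on_lincomb_right: "inner_on J y (\<lambda>c. \<Sum>d\<in>D. g d * f d c) = (\<Sum>d\<in>D. g d * inner_on J y (f d))"
  unfolding inner_on_def by (simp add: sum_distrib_right sum_distrib_left sum.swap[of _ J] mult.left_commute)

lemma inner_on_sum_left: "inner_on I (\<Sum>a\<in>A. f a) y = (\<Sum>a\<in>A. inner_on I (f a) y)"
  unfolding inner_on_def sum_apply by (simp add: sum_distrib_right sum.swap[of _ I])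

lemma inner_on_self_pos:
  assumes "finite I" "supported_on I x" "x \<noteq> 0" shows "inner_on I x x > 0"
proof -
  from assms(3) obtain r where r: "x r \<noteq> 0" by (auto simp: fun_eq_iff)
  with assms(2) have "r \<in> I" by (auto simp: supported_on_def)
  have "0 < x r * x r" using r by (metis not_real_square_gt_zero)
  also have "\<dots> \<le> inner_on I x x" unfolding inner_on_def
    by (rule member_le_sum) (use \<open>r \<in> I\<close> assms(1) in auto)
  finally show ?thesis .
qed

lemma inner_on_self_eq_0_iff:
  assumes "finite I" shows "inner_on I x x = 0 \<longleftrightarrow> (\<forall>r\<in>I. x r = 0)"
  unfolding inner_on_def using sum_nonneg_eq_0_iff[OF assms, of "\<lambda>r. x r * x r"] by simp

lemma inner_on_normalize:
  assumes "inner_on I x x > 0"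
  shows "inner_on I (\<lambda>r. x r / sqrt (inner_on I x x)) (\<lambda>r. x r / sqrt (inner_on I x x)) = 1"
proof -
  have "inner_on I (\<lambda>r. x r / sqrt (inner_on I x x)) (\<lambda>r. x r / sqrt (inner_on I x x))
      = inner_on I x x / (sqrt (inner_on I x x))^2"
    unfolding inner_on_def by (simp add: sum_divide_distrib power2_eq_square)
  then show ?thesis using assms by simp
qed

lemma parseval:
  assumes "finite D" "orthonormal_on J D f"
  shows "inner_on J (\<lambda>c. \<Sum>d\<in>D. g d * f d c) (\<lambda>c. \<Sum>d\<in>D. g d * f d c) = (\<Sum>d\<in>D. (g d)^2)"
proof -
  have "inner_on J (\<lambda>c. \<Sum>d\<in>D. g d * f d c) (\<lambda>c. \<Sum>d\<in>D. g d * f d c)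
      = (\<Sum>d\<in>D. g d * (\<Sum>d'\<in>D. g d' * inner_on J (f d) (f d')))"
    by (simp add: inner_on_lincomb_left inner_on_lincomb_right)
  also have "\<dots> = (\<Sum>d\<in>D. g d * g d)"
    by (rule sum.cong[OF refl], subst sum_kronecker[OF assms(1)]) (use assms(2) in \<open>auto dest: orthonormal_onD\<close>)
  finally show ?thesis by (simp add: power2_eq_square)
qed

lemma norm_sq_residual_orthonormal:
  assumes "finite D" "orthonormal_on J D f"
  shows "inner_on J (\<lambda>c. m c - (\<Sum>d\<in>D. \<beta> d * f d c)) (\<lambda>c. m c - (\<Sum>d\<in>D. \<beta> d * f d c))
     = inner_on J m m - 2 * (\<Sum>d\<in>D. \<beta> d * inner_on J m (f d)) + (\<Sum>d\<in>D. (\<beta> d)^2)"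
proof -
  have "inner_on J (\<lambda>c. m c - (\<Sum>d\<in>D. \<beta> d * f d c)) (\<lambda>c. m c - (\<Sum>d\<in>D. \<beta> d * f d c))
     = inner_on J m m - 2 * inner_on J m (\<lambda>c. \<Sum>d\<in>D. \<beta> d * f d c)
       + inner_on J (\<lambda>c. \<Sum>d\<in>D. \<beta> d * f d c) (\<lambda>c. \<Sum>d\<in>D. \<beta> d * f d c)"
    unfolding inner_on_def by (simp add: sum_subtractf sum.distrib algebra_simps sum_distrib_left)
  then show ?thesis using parseval[OF assms] by (simp add: inner_on_lincomb_right)
qed

lemma norm_sq_residual_ge:
  assumes "finite D" "orthonormal_on J D f"
  shows "inner_on J (\<lambda>c. m c - (\<Sum>d\<in>D. \<beta> d * f d c)) (\<lambda>c. m c - (\<Sum>d\<in>D. \<beta> d * f d c))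
          \<ge> inner_on J m m - (\<Sum>d\<in>D. (inner_on J m (f d))^2)"
proof -
  have "0 \<le> (\<Sum>d\<in>D. (\<beta> d - inner_on J m (f d))^2)" by (simp add: sum_nonneg)
  also have "\<dots> = (\<Sum>d\<in>D. (\<beta> d)^2) - 2 * (\<Sum>d\<in>D. \<beta> d * inner_on J m (f d)) + (\<Sum>d\<in>D. (inner_on J m (f d))^2)"
    by (simp add: power2_diff sum.distrib sum_subtractf sum_distrib_left mult.assoc)
  finally show ?thesis using norm_sq_residual_orthonormal[OF assms, of m \<beta>] by linarith
qed

lemma bessel_inequality:
  assumes "finite D" "orthonormal_on J D f"
  shows "(\<Sum>d\<in>D. (inner_on J x (f d))^2) \<le> inner_on J x x"
  using norm_sq_residual_orthonormal[OF assms, of x "\<lambda>d. inner_on J x (f d)"]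
    inner_on_self_nonneg[of J "\<lambda>c. x c - (\<Sum>d\<in>D. inner_on J x (f d) * f d c)"]
  by (simp add: power2_eq_square)

lemma orthogonal_independent:
  assumes I: "finite I"
    and S: "\<And>x. x \<in> S \<Longrightarrow> supported_on I x \<and> x \<noteq> 0"
    and O: "\<And>x y. x \<in> S \<Longrightarrow> y \<in> S \<Longrightarrow> x \<noteq> y \<Longrightarrow> inner_on I x y = 0"
  shows "fun_space.independent S"
proof
  assume "fun_space.dependent S"
  then obtain t u where t: "finite t" "t \<subseteq> S" and s0: "(\<Sum>v\<in>t. (\<lambda>x. u v * v x)) = 0"
     and v0: "\<exists>v\<in>t. u v \<noteq> 0"
    unfolding fun_space.dependent_explicit by blast
  from v0 obtain w where w: "w \<in> t" "u w \<noteq> 0" by blast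
  have "0 = inner_on I (\<Sum>v\<in>t. (\<lambda>x. u v * v x)) w" by (simp add: s0 inner_on_def)
  also have "\<dots> = (\<Sum>v\<in>t. u v * inner_on I v w)"
    by (simp add: inner_on_sum_left inner_on_scale_left)
  also have "\<dots> = u w * inner_on I w w"
    by (subst sum.remove[OF t(1) w(1)], subst sum.neutral) (use O t w in auto)
  finally have "inner_on I w w = 0" using w by simp
  moreover have "inner_on I w w > 0" using S[of w] t w inner_on_self_pos[OF I] by auto
  ultimately show False by simp
qed

lemma orthonormal_independent:
  assumes "finite I" "orthonormal_on I D u" "\<And>d. d \<in> D \<Longrightarrow> supported_on I (u d)"
  shows "fun_space.independent (u ` D)" and "inj_on u D"
proof -
  have "u d \<noteq> 0" if "d \<in> D" for d
    using orthonormal_onD[OF assms(2) that that] by (auto simp: inner_on_def)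
  then show "fun_space.independent (u ` D)"
  proof (intro orthogonal_independent[OF assms(1)])
    fix x y assume "x \<in> u ` D" "y \<in> u ` D" "x \<noteq> y"
    then obtain d d' where "d \<in> D" "d' \<in> D" "x = u d" "y = u d'" "d \<noteq> d'" by auto
    then show "inner_on I x y = 0" using orthonormal_onD[OF assms(2)] by auto
  qed (use assms(3) in auto)
  show "inj_on u D"
    by (rule inj_onI) (metis orthonormal_onD[OF assms(2)] zero_neq_one)
qed

definition unit_vec :: "'a \<Rightarrow> 'a \<Rightarrow> real" where "unit_vec i = (\<lambda>r. if r = i then 1 else 0)"

lemma supported_on_in_span:
  assumes "finite I" "supported_on I x" shows "x \<in> fun_space.span (unit_vec ` I)"
proof -
  have "x = (\<Sum>i\<in>I. (\<lambda>r. x i * unit_vec i r))"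
  proof
    fix r
    show "x r = (\<Sum>i\<in>I. (\<lambda>r. x i * unit_vec i r)) r"
      using assms by (cases "r \<in> I") (auto simp: sum_apply unit_vec_def supported_on_def if_distrib cong: if_cong)
  qed
  also have "\<dots> \<in> fun_space.span (unit_vec ` I)"
    by (intro fun_space.span_sum fun_space.span_scale fun_space.span_base) auto
  finally show ?thesis .
qed

lemma card_unit_vec: "card (unit_vec ` I) = card I"
  by (rule card_image) (auto simp: inj_on_def unit_vec_def fun_eq_iff)

lemma card_le_of_orthonormal:
  assumes "finite I" "finite D" "orthonormal_on I D u" "\<And>d. d \<in> D \<Longrightarrow> supported_on I (u d)"
  shows "card D \<le> card I"
proof -
  note ind = orthonormal_independent[OF assms(1,3,4)]
  have "card (u ` D) \<le> card (unit_vec ` I)"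
    using fun_space.independent_span_bound[OF _ ind(1)] supported_on_in_span[OF assms(1)] assms(1,4)
    by auto
  then show ?thesis using card_image[OF ind(2)] card_unit_vec[of I] by simp
qed

lemma exists_unit_vec_not_in_span:
  assumes I: "finite I" and D: "finite D" and "card D < card I"
  shows "\<exists>i\<in>I. unit_vec i \<notin> fun_space.span (u ` D)"
proof (rule ccontr)
  assume "\<not> ?thesis"
  then have "unit_vec ` I \<subseteq> fun_space.span (u ` D)" by auto
  moreover have "fun_space.independent (unit_vec ` I)"
    by (rule orthogonal_independent[OF I])
       (auto simp: supported_on_def unit_vec_def fun_eq_iff inner_on_def intro!: sum.neutral)
  ultimately have "card (unit_vec ` I) \<le> card (u ` D)"
    using fun_space.independent_span_bound[OF finite_imageI[OF D]] by blast
  then show False using card_image_le[OF D, of u] card_unit_vec[of I] assms(3) by simp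
qed

lemma exists_unit_orthogonal:
  assumes I: "finite I" and D: "finite D" and cD: "card D < card I"
    and U: "\<And>d. d \<in> D \<Longrightarrow> supported_on I (u d)" and O: "orthonormal_on I D u"
  shows "\<exists>x. supported_on I x \<and> inner_on I x x = 1 \<and> (\<forall>d\<in>D. inner_on I x (u d) = 0)"
proof -
  obtain i where i: "i \<in> I" "unit_vec i \<notin> fun_space.span (u ` D)"
    using exists_unit_vec_not_in_span[OF I D cD] by blast
  define z where "z = unit_vec i - (\<Sum>d\<in>D. (\<lambda>r. u d i * u d r))"
  have zsupp: "supported_on I z"
    using U i by (auto simp: z_def supported_on_def unit_vec_def sum_apply)
  have "z \<noteq> 0"
  proof
    assume "z = 0"
    then have "unit_vec i = (\<Sum>d\<in>D. (\<lambda>r. u d i * u d r))" by (simp add: z_def)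
    also have "\<dots> \<in> fun_space.span (u ` D)"
      by (intro fun_space.span_sum fun_space.span_scale fun_space.span_base) auto
    finally show False using i by blast
  qed
  have z_orth: "inner_on I z (u d') = 0" if d': "d' \<in> D" for d'
  proof -
    have "inner_on I (unit_vec i) (u d') = (\<Sum>r\<in>I. if r = i then u d' r else 0)"
      unfolding inner_on_def unit_vec_def by (rule sum.cong) auto
    also have "\<dots> = u d' i" using i I by simp
    finally have "inner_on I (unit_vec i) (u d') = u d' i" .
    moreover have "inner_on I (\<Sum>d\<in>D. (\<lambda>r. u d i * u d r)) (u d') = u d' i"
      unfolding inner_on_sum_left inner_on_scale_left
      by (rule sum_kronecker[OF D d']) (use orthonormal_onD[OF O _ d'] in auto)
    ultimately show ?thesis
      unfolding z_def inner_on_def by (simp add: algebra_simps sum_subtractf)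
  qed
  have zp: "inner_on I z z > 0" by (rule inner_on_self_pos[OF I zsupp \<open>z \<noteq> 0\<close>])
  define x where "x = (\<lambda>r. z r / sqrt (inner_on I z z))"
  have "inner_on I x x = 1" unfolding x_def by (rule inner_on_normalize[OF zp])
  moreover have "supported_on I x" using zsupp by (simp add: x_def supported_on_def)
  moreover have "\<forall>d\<in>D. inner_on I x (u d) = 0"
    using z_orth unfolding x_def inner_on_def by (simp add: sum_divide_distrib[symmetric])
  ultimately show ?thesis by blast
qed

lemma orthogonal_to_orthonormal_basis:
  assumes I: "finite I" and k: "card I = k"
    and U: "\<And>d. d \<in> {1..k} \<Longrightarrow> supported_on I (u d)" and O: "orthonormal_on I {1..k} u"
    and z: "\<And>d. d \<in> {1..k} \<Longrightarrow> inner_on I z (u d) = 0"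
  shows "\<forall>r\<in>I. z r = 0"
proof (rule ccontr)
  assume "\<not> ?thesis"
  then have pos: "inner_on I z z > 0"
    using inner_on_self_nonneg[of I z] inner_on_self_eq_0_iff[OF I, of z] by auto
  define z' where "z' = (\<lambda>r. if r \<in> I then z r / sqrt (inner_on I z z) else 0)"
  have z'_unit: "inner_on I z' z' = 1"
    using inner_on_normalize[OF pos] by (simp add: z'_def cong: inner_on_cong)
  have z'_orth: "inner_on I z' (u d) = 0" if "d \<in> {1..k}" for d
    using z[OF that] unfolding z'_def inner_on_def by (simp add: sum_divide_distrib[symmetric])
  define u' where "u' = u(Suc k := z')"
  have "orthonormal_on I {1..Suc k} u'"
    unfolding orthonormal_on_def u'_def
    using orthonormal_onD[OF O] z'_unit z'_orth by (auto simp: inner_on_commute)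
  moreover have "supported_on I (u' d)" if "d \<in> {1..Suc k}" for d
    using U that by (auto simp: u'_def z'_def supported_on_def)
  ultimately have "card {1..Suc k} \<le> card I" by (intro card_le_of_orthonormal[OF I]) auto
  then show False using k by simp
qed

section \<open>Singular value decomposition\<close>

definition mat_vec :: "'b set \<Rightarrow> ('a \<Rightarrow> 'b \<Rightarrow> real) \<Rightarrow> ('b \<Rightarrow> real) \<Rightarrow> 'a \<Rightarrow> real" where
  "mat_vec J M y = (\<lambda>r. \<Sum>c\<in>J. M r c * y c)"

definition bilin :: "'a set \<Rightarrow> 'b set \<Rightarrow> ('a \<Rightarrow> 'b \<Rightarrow> real) \<Rightarrow> ('a \<Rightarrow> real) \<Rightarrow> ('b \<Rightarrow> real) \<Rightarrow> real" where
  "bilin I J M x y = (\<Sum>r\<in>I. \<Sum>c\<in>J. x r * M r c * y c)"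

lemma bilin_mat_vec: "bilin I J M x y = inner_on I x (mat_vec J M y)"
  unfolding bilin_def inner_on_def mat_vec_def by (simp add: sum_distrib_left mult.assoc)

text \<open>Transposition lemmas must be instantiated before use in the simplifier, which otherwise loops.\<close>

lemma bilin_transpose: "bilin J I (\<lambda>c r. M r c) y x = bilin I J M x y"
  unfolding bilin_def by (subst sum.swap) (simp add: ac_simps)

lemma bilin_neg_left: "bilin I J M (\<lambda>r. - x r) y = - bilin I J M x y"
  unfolding bilin_def by (simp add: sum_negf)

definition unit_perp :: "'a set \<Rightarrow> (nat \<Rightarrow> 'a \<Rightarrow> real) \<Rightarrow> nat \<Rightarrow> ('a \<Rightarrow> real) set" where
  "unit_perp I u k =
     {x. supported_on I x \<and> inner_on I x x = 1 \<and> (\<forall>d\<in>{1..k}. inner_on I x (u d) = 0)}"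

lemma unit_perp_neg: "x \<in> unit_perp I u k \<Longrightarrow> (\<lambda>r. - x r) \<in> unit_perp I u k"
  by (auto simp: unit_perp_def supported_on_def inner_on_def sum_negf)

lemma unit_perp_cong: "(\<And>d. d \<in> {1..k} \<Longrightarrow> u d = u' d) \<Longrightarrow> unit_perp I u k = unit_perp I u' k"
  unfolding unit_perp_def by auto

lemma continuous_on_coordinate: "continuous_on S (\<lambda>x. x r :: real)"
  by (rule continuous_on_subset[OF continuous_on_product_coordinates]) auto

lemma compact_unit_perp:
  assumes I: "finite I" shows "compact (unit_perp I u k)"
proof -
  have box: "compact (PiE UNIV (\<lambda>i::'a. {-1..1::real}))"
    by (metis compactin_PiE compact_Icc compactin_euclidean_iff euclidean_product_topology)
  have "unit_perp I u k = (\<Inter>r\<in>-I. {x. x r = 0}) \<inter> {x. inner_on I x x = 1}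
                          \<inter> (\<Inter>d\<in>{1..k}. {x. inner_on I x (u d) = 0})"
    unfolding unit_perp_def supported_on_def by auto
  moreover have "closed \<dots>"
    unfolding inner_on_def
    by (intro closed_Int closed_INT ballI closed_Collect_eq continuous_on_sum continuous_on_mult
        continuous_on_const continuous_on_coordinate)
  ultimately have closed: "closed (unit_perp I u k)" by simp
  have "\<bar>x r\<bar> \<le> 1" if x: "x \<in> unit_perp I u k" for x r
  proof (cases "r \<in> I")
    case True
    have "x r * x r \<le> inner_on I x x" unfolding inner_on_def
      by (rule member_le_sum) (use True I in auto)
    then have "(x r)^2 \<le> 1^2" using x by (simp add: unit_perp_def power2_eq_square)
    then show ?thesis by (metis abs_le_square_iff abs_one)
  next
    case False then show ?thesis using x by (simp add: unit_perp_def supported_on_def)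
  qed
  then have "unit_perp I u k \<subseteq> PiE UNIV (\<lambda>i::'a. {-1..1::real})" by (auto simp: abs_le_iff)
  then show ?thesis using compact_Int_closed[OF box closed] by (simp add: Int_absorb1)
qed

text \<open>First-order condition of the variational characterization of singular values.\<close>

lemma maximizer_parallel:
  assumes I: "finite I"
    and g_orth: "\<And>d. d \<in> {1..k} \<Longrightarrow> inner_on I g (u d) = 0"
    and x0: "x0 \<in> unit_perp I u k"
    and max: "\<And>x. x \<in> unit_perp I u k \<Longrightarrow> inner_on I x g \<le> inner_on I x0 g"
  shows "\<forall>r\<in>I. g r = inner_on I x0 g * x0 r"
proof -
  define s where "s = inner_on I x0 g"
  have x0_unit: "inner_on I x0 x0 = 1" using x0 by (simp add: unit_perp_def)
  have s0: "s \<ge> 0"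
    using max[OF unit_perp_neg[OF x0]] unfolding s_def inner_on_def by (simp add: sum_negf)
  have gg: "inner_on I g g \<le> s^2"
  proof (cases "inner_on I g g = 0")
    case False
    then have pos: "inner_on I g g > 0" using inner_on_self_nonneg[of I g] by simp
    define x where "x = (\<lambda>r. if r \<in> I then g r / sqrt (inner_on I g g) else 0)"
    have "inner_on I x x = 1"
      using inner_on_normalize[OF pos] by (simp add: x_def cong: inner_on_cong)
    moreover have "inner_on I x (u d) = 0" if "d \<in> {1..k}" for d
      using g_orth[OF that] unfolding x_def inner_on_def by (simp add: sum_divide_distrib[symmetric])
    ultimately have "x \<in> unit_perp I u k" by (simp add: unit_perp_def supported_on_def x_def)
    moreover have "inner_on I x g = sqrt (inner_on I g g)"
      using pos unfolding x_def inner_on_def by (simp add: sum_divide_distrib[symmetric] real_div_sqrt)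
    ultimately have "sqrt (inner_on I g g) \<le> s" using max s_def by fastforce
    then show ?thesis using pos s0 by (metis less_eq_real_def real_sqrt_le_iff real_sqrt_unique)
  qed simp
  define e where "e = (\<lambda>r. g r - s * x0 r)"
  have "inner_on I e e = inner_on I g g - 2 * s * inner_on I x0 g + s^2 * inner_on I x0 x0"
    unfolding inner_on_def e_def
    by (simp add: power2_eq_square algebra_simps sum.distrib sum_subtractf sum_distrib_left)
  also have "\<dots> = inner_on I g g - s^2" using x0_unit by (simp add: s_def power2_eq_square)
  finally have "inner_on I e e = 0" using gg inner_on_self_nonneg[of I e] by simp
  then show ?thesis using inner_on_self_eq_0_iff[OF I] by (simp add: e_def s_def)
qed

definition singular_pair ::
    "'a set \<Rightarrow> 'b set \<Rightarrow> ('a \<Rightarrow> 'b \<Rightarrow> real) \<Rightarrow> real \<Rightarrow> ('a \<Rightarrow> real) \<Rightarrow> ('b \<Rightarrow> real) \<Rightarrow> bool" where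
  "singular_pair I J M s x y \<longleftrightarrow> supported_on I x \<and> supported_on J y \<and>
     (\<forall>r\<in>I. mat_vec J M y r = s * x r) \<and> (\<forall>c\<in>J. mat_vec I (\<lambda>c r. M r c) x c = s * y c)"

lemma singular_pair_transpose:
  "singular_pair J I (\<lambda>c r. M r c) s y x \<longleftrightarrow> singular_pair I J M s x y"
  unfolding singular_pair_def by auto

text \<open>A partial SVD of rank \<open>k\<close> built variationally: \<open>\<sigma> d\<close> is the maximum of the bilinear form over
  unit vectors orthogonal to the first \<open>d - 1\<close> singular vectors.\<close>

definition partial_svd :: "'a set \<Rightarrow> 'b set \<Rightarrow> ('a \<Rightarrow> 'b \<Rightarrow> real) \<Rightarrow> nat \<Rightarrow> (nat \<Rightarrow> real)
    \<Rightarrow> (nat \<Rightarrow> 'a \<Rightarrow> real) \<Rightarrow> (nat \<Rightarrow> 'b \<Rightarrow> real) \<Rightarrow> bool" where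
  "partial_svd I J M k \<sigma> u v \<longleftrightarrow>
    (\<forall>d\<in>{1..k}. \<sigma> d \<ge> 0 \<and> singular_pair I J M (\<sigma> d) (u d) (v d)) \<and>
    orthonormal_on I {1..k} u \<and> orthonormal_on J {1..k} v \<and>
    (\<forall>d\<in>{1..k}. \<forall>x\<in>unit_perp I u (d - 1). \<forall>y\<in>unit_perp J v (d - 1). bilin I J M x y \<le> \<sigma> d)"

lemma partial_svdD:
  assumes "partial_svd I J M k \<sigma> u v"
  shows "\<And>d. d \<in> {1..k} \<Longrightarrow> \<sigma> d \<ge> 0"
    and "\<And>d. d \<in> {1..k} \<Longrightarrow> singular_pair I J M (\<sigma> d) (u d) (v d)"
    and "orthonormal_on I {1..k} u" and "orthonormal_on J {1..k} v"
    and "\<And>d x y. d \<in> {1..k} \<Longrightarrow> x \<in> unit_perp I u (d - 1) \<Longrightarrow> y \<in> unit_perp J v (d - 1)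
           \<Longrightarrow> bilin I J M x y \<le> \<sigma> d"
  using assms unfolding partial_svd_def by blast+

lemma partial_svdI:
  assumes "\<And>d. d \<in> {1..k} \<Longrightarrow> \<sigma> d \<ge> 0"
    and "\<And>d. d \<in> {1..k} \<Longrightarrow> singular_pair I J M (\<sigma> d) (u d) (v d)"
    and "orthonormal_on I {1..k} u" and "orthonormal_on J {1..k} v"
    and "\<And>d x y. d \<in> {1..k} \<Longrightarrow> x \<in> unit_perp I u (d - 1) \<Longrightarrow> y \<in> unit_perp J v (d - 1)
           \<Longrightarrow> bilin I J M x y \<le> \<sigma> d"
  shows "partial_svd I J M k \<sigma> u v"
  using assms unfolding partial_svd_def by blast

lemma partial_svd_transpose:
  assumes P: "partial_svd I J M k \<sigma> u v"
  shows "partial_svd J I (\<lambda>c r. M r c) k \<sigma> v u"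
  by (rule partial_svdI)
     (use partial_svdD[OF P] in \<open>simp_all add: singular_pair_transpose[where M = M] bilin_transpose[where M = M]\<close>)

lemma partial_svd_orthogonal_image:
  assumes P: "partial_svd I J M k \<sigma> u v" and y: "y \<in> unit_perp J v k" and d: "d \<in> {1..k}"
  shows "inner_on I (mat_vec J M y) (u d) = 0"
proof -
  have "inner_on I (mat_vec J M y) (u d) = inner_on J (mat_vec I (\<lambda>c r. M r c) (u d)) y"
    using bilin_mat_vec[of I J M "u d" y] bilin_mat_vec[of J I "\<lambda>c r. M r c" y "u d"]
    by (simp add: bilin_transpose[where M = M] inner_on_commute)
  also have "\<dots> = inner_on J (\<lambda>c. \<sigma> d * v d c) y"
    using partial_svdD(2)[OF P d] by (intro inner_on_cong) (auto simp: singular_pair_def)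
  also have "\<dots> = 0" using y d by (simp add: inner_on_scale_left inner_on_commute unit_perp_def)
  finally show ?thesis .
qed

lemma exists_max_bilin:
  assumes "X \<noteq> {}" "Y \<noteq> {}" "compact X" "compact Y"
  shows "\<exists>x\<in>X. \<exists>y\<in>Y. \<forall>x'\<in>X. \<forall>y'\<in>Y. bilin I J M x' y' \<le> bilin I J M x y"
proof -
  have "continuous_on (X \<times> Y) (\<lambda>p. fst p r)" "continuous_on (X \<times> Y) (\<lambda>p. snd p c)" for r c
    using continuous_on_compose[OF continuous_on_fst[OF continuous_on_id] continuous_on_coordinate]
      continuous_on_compose[OF continuous_on_snd[OF continuous_on_id] continuous_on_coordinate]
    by (simp_all add: o_def)
  then have "continuous_on (X \<times> Y) (\<lambda>p. bilin I J M (fst p) (snd p))"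
    unfolding bilin_def by (intro continuous_on_sum continuous_on_mult continuous_on_const)
  then obtain p where "p \<in> X \<times> Y" "\<forall>q\<in>X \<times> Y. bilin I J M (fst q) (snd q) \<le> bilin I J M (fst p) (snd p)"
    using continuous_attains_sup[OF compact_Times[OF assms(3,4)]] assms(1,2) by blast
  then show ?thesis by (metis SigmaE SigmaI fst_conv snd_conv)
qed

lemma partial_svd_next_pair:
  assumes I: "finite I" and J: "finite J" and P: "partial_svd I J M k \<sigma> u v"
    and x: "x \<in> unit_perp I u k" and y: "y \<in> unit_perp J v k"
    and max: "\<And>x' y'. x' \<in> unit_perp I u k \<Longrightarrow> y' \<in> unit_perp J v k \<Longrightarrow> bilin I J M x' y' \<le> bilin I J M x y"
  shows "bilin I J M x y \<ge> 0" and "singular_pair I J M (bilin I J M x y) x y"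
proof -
  show "bilin I J M x y \<ge> 0"
    using max[OF unit_perp_neg[OF x] y] by (simp add: bilin_neg_left)
  have "\<forall>r\<in>I. mat_vec J M y r = bilin I J M x y * x r"
    using maximizer_parallel[OF I partial_svd_orthogonal_image[OF P y] x] max[OF _ y]
    by (simp add: bilin_mat_vec)
  moreover have "\<forall>c\<in>J. mat_vec I (\<lambda>c r. M r c) x c = bilin I J M x y * y c"
    using maximizer_parallel[OF J partial_svd_orthogonal_image[OF partial_svd_transpose[OF P] x] y] max[OF x]
    by (simp add: bilin_mat_vec[symmetric] bilin_transpose[where M = M])
  ultimately show "singular_pair I J M (bilin I J M x y) x y"
    using x y by (simp add: singular_pair_def unit_perp_def)
qed

lemma orthonormal_on_extend:
  assumes "orthonormal_on I {1..k} u" "x \<in> unit_perp I u k"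
  shows "orthonormal_on I {1..Suc k} (u(Suc k := x))"
  using assms unfolding orthonormal_on_def unit_perp_def by (auto simp: inner_on_commute)

lemma partial_svd_update:
  assumes P: "partial_svd I J M k \<sigma> u v" and x: "x \<in> unit_perp I u k" and y: "y \<in> unit_perp J v k"
    and s: "s \<ge> 0" "singular_pair I J M s x y"
    and max: "\<And>x' y'. x' \<in> unit_perp I u k \<Longrightarrow> y' \<in> unit_perp J v k \<Longrightarrow> bilin I J M x' y' \<le> s"
  shows "partial_svd I J M (Suc k) (\<sigma>(Suc k := s)) (u(Suc k := x)) (v(Suc k := y))"
proof (rule partial_svdI)
  fix d assume d: "d \<in> {1..Suc k}"
  have "(\<sigma>(Suc k := s)) d \<ge> 0 \<and>
      singular_pair I J M ((\<sigma>(Suc k := s)) d) ((u(Suc k := x)) d) ((v(Suc k := y)) d)"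
  proof (cases "d = Suc k")
    case False
    with d have "d \<in> {1..k}" by auto
    with False show ?thesis by (simp add: partial_svdD(1,2)[OF P])
  qed (simp add: s)
  then show "(\<sigma>(Suc k := s)) d \<ge> 0"
    and "singular_pair I J M ((\<sigma>(Suc k := s)) d) ((u(Suc k := x)) d) ((v(Suc k := y)) d)"
    by simp_all
  have "d - 1 \<le> k" using d by auto
  then have "unit_perp I (u(Suc k := x)) (d - 1) = unit_perp I u (d - 1)"
    "unit_perp J (v(Suc k := y)) (d - 1) = unit_perp J v (d - 1)"
    by (auto intro!: unit_perp_cong)
  moreover fix x' y'
  assume "x' \<in> unit_perp I (u(Suc k := x)) (d - 1)" "y' \<in> unit_perp J (v(Suc k := y)) (d - 1)"
  ultimately have xy': "x' \<in> unit_perp I u (d - 1)" "y' \<in> unit_perp J v (d - 1)" by simp_all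
  show "bilin I J M x' y' \<le> (\<sigma>(Suc k := s)) d"
  proof (cases "d = Suc k")
    case False
    with d have "d \<in> {1..k}" by auto
    with False show ?thesis using partial_svdD(5)[OF P _ xy'] by simp
  qed (use max xy' in simp)
next
  show "orthonormal_on I {1..Suc k} (u(Suc k := x))" "orthonormal_on J {1..Suc k} (v(Suc k := y))"
    by (intro orthonormal_on_extend partial_svdD[OF P] x y)+
qed

lemma partial_svd_extend:
  assumes I: "finite I" and J: "finite J" and kI: "k < card I" and kJ: "k < card J"
    and P: "partial_svd I J M k \<sigma> u v"
  shows "\<exists>\<sigma>' u' v'. partial_svd I J M (Suc k) \<sigma>' u' v'"
proof -
  have "\<And>d. d \<in> {1..k} \<Longrightarrow> supported_on I (u d)" "\<And>d. d \<in> {1..k} \<Longrightarrow> supported_on J (v d)"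
    using partial_svdD(2)[OF P] by (simp_all add: singular_pair_def)
  then have "unit_perp I u k \<noteq> {}" "unit_perp J v k \<noteq> {}"
    using exists_unit_orthogonal[OF I _ _ _ partial_svdD(3)[OF P]]
      exists_unit_orthogonal[OF J _ _ _ partial_svdD(4)[OF P]] kI kJ
    by (auto simp: unit_perp_def)
  then obtain x y where x: "x \<in> unit_perp I u k" and y: "y \<in> unit_perp J v k"
    and max: "\<And>x' y'. x' \<in> unit_perp I u k \<Longrightarrow> y' \<in> unit_perp J v k \<Longrightarrow> bilin I J M x' y' \<le> bilin I J M x y"
    using exists_max_bilin[OF _ _ compact_unit_perp[OF I] compact_unit_perp[OF J]] by metis
  then show ?thesis
    using partial_svd_update[OF P x y partial_svd_next_pair[OF I J P x y max]] by blast
qed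

lemma partial_svd_exists:
  assumes "finite I" "finite J"
  shows "k \<le> min (card I) (card J) \<Longrightarrow> \<exists>\<sigma> u v. partial_svd I J M k \<sigma> u v"
proof (induction k)
  case 0 then show ?case by (auto simp: partial_svd_def orthonormal_on_def)
next
  case (Suc k)
  then show ?case using partial_svd_extend[OF assms] by auto
qed

lemma singular_pair_bilin:
  assumes "singular_pair I J M s x y" "inner_on I x x = 1"
  shows "bilin I J M x y = s"
proof -
  have "bilin I J M x y = inner_on I x (\<lambda>r. s * x r)"
    unfolding bilin_mat_vec using assms(1) by (intro inner_on_cong) (auto simp: singular_pair_def)
  then show ?thesis using assms(2) by (simp add: inner_on_scale_right)
qed

lemma partial_svd_decreasing:
  assumes P: "partial_svd I J M k \<sigma> u v" and d: "d \<in> {1..<k}"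
  shows "\<sigma> (Suc d) \<le> \<sigma> d"
proof -
  have d1: "Suc d \<in> {1..k}" "d \<in> {1..k}" using d by auto
  note O = orthonormal_onD[OF partial_svdD(3)[OF P] d1(1)] orthonormal_onD[OF partial_svdD(4)[OF P] d1(1)]
  have "u (Suc d) \<in> unit_perp I u (d - 1)" "v (Suc d) \<in> unit_perp J v (d - 1)"
    using partial_svdD(2)[OF P d1(1)] O d1 by (auto simp: singular_pair_def unit_perp_def)
  then have "bilin I J M (u (Suc d)) (v (Suc d)) \<le> \<sigma> d"
    by (rule partial_svdD(5)[OF P d1(2)])
  then show ?thesis
    using singular_pair_bilin[OF partial_svdD(2)[OF P d1(1)]] O d1 by simp
qed

lemma partial_svd_reconstruct:
  assumes I: "finite I" and P: "partial_svd I J M k \<sigma> u v" and k: "k = card I"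
    and r: "r \<in> I" and c: "c \<in> J"
  shows "M r c = (\<Sum>d\<in>{1..k}. \<sigma> d * u d r * v d c)"
proof -
  define z where "z = (\<lambda>r. M r c - (\<Sum>d\<in>{1..k}. \<sigma> d * u d r * v d c))"
  have "inner_on I z (u d') = 0" if d': "d' \<in> {1..k}" for d'
  proof -
    have "inner_on I z (u d') = mat_vec I (\<lambda>c r. M r c) (u d') c
            - (\<Sum>d\<in>{1..k}. \<sigma> d * v d c * inner_on I (u d) (u d'))"
      unfolding z_def inner_on_def mat_vec_def
      by (simp add: sum_subtractf left_diff_distrib sum_distrib_left sum_distrib_right sum.swap[of _ I] algebra_simps)
    also have "(\<Sum>d\<in>{1..k}. \<sigma> d * v d c * inner_on I (u d) (u d')) = \<sigma> d' * v d' c"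
      by (rule sum_kronecker) (use orthonormal_onD[OF partial_svdD(3)[OF P] _ d'] d' in auto)
    finally show ?thesis using partial_svdD(2)[OF P d'] c by (simp add: singular_pair_def)
  qed
  moreover have "\<And>d. d \<in> {1..k} \<Longrightarrow> supported_on I (u d)"
    using partial_svdD(2)[OF P] by (simp add: singular_pair_def)
  ultimately show ?thesis
    using orthogonal_to_orthonormal_basis[OF I k[symmetric], of u z] partial_svdD(3)[OF P] r
    by (auto simp: z_def)
qed

definition svd_on :: "'a set \<Rightarrow> 'b set \<Rightarrow> ('a \<Rightarrow> 'b \<Rightarrow> real) \<Rightarrow> nat \<Rightarrow> (nat \<Rightarrow> real)
    \<Rightarrow> (nat \<Rightarrow> 'a \<Rightarrow> real) \<Rightarrow> (nat \<Rightarrow> 'b \<Rightarrow> real) \<Rightarrow> bool" where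
  "svd_on I J M k \<sigma> u v \<longleftrightarrow>
     (\<forall>d\<in>{1..k}. \<sigma> d \<ge> 0) \<and> (\<forall>d\<in>{1..<k}. \<sigma> (Suc d) \<le> \<sigma> d) \<and>
     orthonormal_on I {1..k} u \<and> orthonormal_on J {1..k} v \<and>
     (\<forall>r\<in>I. \<forall>c\<in>J. M r c = (\<Sum>d\<in>{1..k}. \<sigma> d * u d r * v d c))"

lemma svd_onD:
  assumes "svd_on I J M k \<sigma> u v"
  shows "\<And>d. d \<in> {1..k} \<Longrightarrow> \<sigma> d \<ge> 0"
    and "\<And>d. d \<in> {1..<k} \<Longrightarrow> \<sigma> (Suc d) \<le> \<sigma> d"
    and "orthonormal_on I {1..k} u" and "orthonormal_on J {1..k} v"
    and "\<And>r c. r \<in> I \<Longrightarrow> c \<in> J \<Longrightarrow> M r c = (\<Sum>d\<in>{1..k}. \<sigma> d * u d r * v d c)"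
  using assms unfolding svd_on_def by blast+

lemma svd_exists:
  assumes I: "finite I" and J: "finite J"
  shows "\<exists>\<sigma> u v. svd_on I J M (min (card I) (card J)) \<sigma> u v"
proof -
  define k where "k = min (card I) (card J)"
  obtain \<sigma> u v where P: "partial_svd I J M k \<sigma> u v"
    using partial_svd_exists[OF I J, of k M] by (auto simp: k_def)
  have "M r c = (\<Sum>d\<in>{1..k}. \<sigma> d * u d r * v d c)" if "r \<in> I" "c \<in> J" for r c
  proof (cases "k = card I")
    case True
    show ?thesis by (rule partial_svd_reconstruct[OF I P True that])
  next
    case False
    then have "k = card J" by (simp add: k_def min_def split: if_splits)
    then show ?thesis
      using partial_svd_reconstruct[OF J partial_svd_transpose[OF P] _ that(2,1)]
      by (simp add: ac_simps)
  qed
  then have "svd_on I J M k \<sigma> u v"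
    unfolding svd_on_def using partial_svdD(1,3,4)[OF P] partial_svd_decreasing[OF P] by blast
  then show ?thesis by (auto simp: k_def)
qed

section \<open>Best approximation by matrices of low rank\<close>

lemma svd_mat_vec_norm:
  assumes S: "svd_on I J M k \<sigma> u v"
  shows "(\<Sum>r\<in>I. (\<Sum>c\<in>J. M r c * b c)^2) = (\<Sum>e\<in>{1..k}. (\<sigma> e)^2 * (inner_on J (v e) b)^2)"
proof -
  have "(\<Sum>c\<in>J. M r c * b c) = (\<Sum>e\<in>{1..k}. (\<sigma> e * inner_on J (v e) b) * u e r)" if r: "r \<in> I" for r
  proof -
    have "(\<Sum>c\<in>J. M r c * b c) = (\<Sum>c\<in>J. \<Sum>e\<in>{1..k}. \<sigma> e * u e r * v e c * b c)"
      by (rule sum.cong) (use svd_onD(5)[OF S r] in \<open>auto simp: sum_distrib_right\<close>)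
    also have "\<dots> = (\<Sum>e\<in>{1..k}. (\<sigma> e * inner_on J (v e) b) * u e r)"
      by (subst sum.swap) (simp add: inner_on_def sum_distrib_left sum_distrib_right algebra_simps)
    finally show ?thesis .
  qed
  then have "(\<Sum>r\<in>I. (\<Sum>c\<in>J. M r c * b c)^2)
      = inner_on I (\<lambda>r. \<Sum>e\<in>{1..k}. (\<sigma> e * inner_on J (v e) b) * u e r)
                   (\<lambda>r. \<Sum>e\<in>{1..k}. (\<sigma> e * inner_on J (v e) b) * u e r)"
    unfolding inner_on_def power2_eq_square by (intro sum.cong) auto
  also have "\<dots> = (\<Sum>e\<in>{1..k}. (\<sigma> e * inner_on J (v e) b)^2)"
    by (rule parseval[OF _ svd_onD(3)[OF S]]) simp
  finally show ?thesis by (simp add: power_mult_distrib)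
qed

lemma svd_frobenius:
  assumes S: "svd_on I J M k \<sigma> u v"
  shows "(\<Sum>r\<in>I. \<Sum>c\<in>J. (M r c)^2) = (\<Sum>e\<in>{1..k}. (\<sigma> e)^2)"
proof -
  have col: "(\<Sum>r\<in>I. (M r c)^2) = (\<Sum>e\<in>{1..k}. (\<sigma> e * v e c)^2)" if c: "c \<in> J" for c
  proof -
    have "(\<Sum>r\<in>I. (M r c)^2)
        = inner_on I (\<lambda>r. \<Sum>e\<in>{1..k}. (\<sigma> e * v e c) * u e r) (\<lambda>r. \<Sum>e\<in>{1..k}. (\<sigma> e * v e c) * u e r)"
      unfolding inner_on_def power2_eq_square
      by (rule sum.cong) (use svd_onD(5)[OF S _ c] in \<open>auto simp: algebra_simps\<close>)
    also have "\<dots> = (\<Sum>e\<in>{1..k}. (\<sigma> e * v e c)^2)"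
      by (rule parseval[OF _ svd_onD(3)[OF S]]) simp
    finally show ?thesis .
  qed
  have "(\<Sum>r\<in>I. \<Sum>c\<in>J. (M r c)^2) = (\<Sum>c\<in>J. \<Sum>e\<in>{1..k}. (\<sigma> e * v e c)^2)"
    by (subst sum.swap) (simp add: col)
  also have "\<dots> = (\<Sum>e\<in>{1..k}. (\<sigma> e)^2 * inner_on J (v e) (v e))"
    by (subst sum.swap) (simp add: inner_on_def power_mult_distrib sum_distrib_left power2_eq_square ac_simps)
  also have "\<dots> = (\<Sum>e\<in>{1..k}. (\<sigma> e)^2)"
    using orthonormal_onD[OF svd_onD(4)[OF S]] by simp
  finally show ?thesis .
qed

lemma svd_bilin_singular_vectors:
  assumes S: "svd_on I J M k \<sigma> u v" and d: "d \<in> {1..k}"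
  shows "bilin I J M (u d) (v d) = \<sigma> d"
proof -
  have "mat_vec J M (v d) r = \<sigma> d * u d r" if r: "r \<in> I" for r
  proof -
    have "mat_vec J M (v d) r = (\<Sum>c\<in>J. \<Sum>e\<in>{1..k}. \<sigma> e * u e r * v e c * v d c)"
      unfolding mat_vec_def by (rule sum.cong) (use svd_onD(5)[OF S r] in \<open>auto simp: sum_distrib_right\<close>)
    also have "\<dots> = (\<Sum>e\<in>{1..k}. (\<sigma> e * u e r) * inner_on J (v e) (v d))"
      by (subst sum.swap) (simp add: inner_on_def sum_distrib_left mult.assoc)
    also have "\<dots> = \<sigma> d * u d r"
      by (rule sum_kronecker) (use orthonormal_onD[OF svd_onD(4)[OF S]] d in auto)
    finally show ?thesis .
  qed
  then have "bilin I J M (u d) (v d) = \<sigma> d * inner_on I (u d) (u d)"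
    unfolding bilin_mat_vec by (simp add: inner_on_scale_right[symmetric] cong: inner_on_cong)
  then show ?thesis using orthonormal_onD[OF svd_onD(3)[OF S] d d] by simp
qed

lemma card_orthonormal_in_span_le:
  assumes J: "finite J" and P: "finite P" and O: "orthonormal_on J T f"
    and f: "\<And>d c. d \<in> T \<Longrightarrow> c \<in> J \<Longrightarrow> f d c = (\<Sum>p\<in>P. \<beta> d p * b p c)"
  shows "card T \<le> card P"
proof -
  define restr where "restr x = (\<lambda>c. if c \<in> J then x c else 0)" for x :: "'a \<Rightarrow> real"
  define z where "z d = restr (f d)" for d
  have "orthonormal_on J T z"
    using O unfolding orthonormal_on_def z_def restr_def by (simp cong: inner_on_cong)
  note ind = orthonormal_independent[OF J this]
  have "z d = (\<Sum>p\<in>P. (\<lambda>c. \<beta> d p * restr (b p) c))" if "d \<in> T" for d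
    using f[OF that] by (auto simp: z_def restr_def sum_apply fun_eq_iff)
  moreover have "(\<lambda>c. \<beta> d p * restr (b p) c) \<in> fun_space.span (restr ` b ` P)" if "p \<in> P" for d p
    by (intro fun_space.span_scale fun_space.span_base) (use that in auto)
  ultimately have "z ` T \<subseteq> fun_space.span (restr ` b ` P)"
    by (auto intro: fun_space.span_sum)
  then have "card (z ` T) \<le> card (restr ` b ` P)"
    using fun_space.independent_span_bound[OF _ ind(1)] P by (auto simp: z_def restr_def supported_on_def)
  also have "\<dots> \<le> card P" using card_image_le[OF P] card_image_le[OF finite_imageI[OF P]] le_trans by blast
  finally show ?thesis
    using card_image[OF ind(2)] by (simp add: z_def restr_def supported_on_def)
qed

lemma card_nonzero_singular_values_le:
  assumes I: "finite I" and J: "finite J" and P: "finite P"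
    and W: "\<And>r c. r \<in> I \<Longrightarrow> c \<in> J \<Longrightarrow> W r c = (\<Sum>p\<in>P. a p r * b p c)"
    and S: "svd_on I J W k \<tau> u v"
  shows "card {d\<in>{1..k}. \<tau> d \<noteq> 0} \<le> card P"
proof (rule card_orthonormal_in_span_le[OF J P])
  show "orthonormal_on J {d\<in>{1..k}. \<tau> d \<noteq> 0} v"
    by (rule orthonormal_on_subset[OF svd_onD(4)[OF S]]) auto
  fix d c assume d: "d \<in> {d\<in>{1..k}. \<tau> d \<noteq> 0}" and c: "c \<in> J"
  have "mat_vec I (\<lambda>c r. W r c) (u d) c = \<tau> d * v d c"
  proof -
    have "mat_vec I (\<lambda>c r. W r c) (u d) c = (\<Sum>e\<in>{1..k}. (\<tau> e * v e c) * inner_on I (u e) (u d))"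
      unfolding mat_vec_def using svd_onD(5)[OF S _ c]
      by (simp add: inner_on_def sum_distrib_left sum_distrib_right sum.swap[of _ I] algebra_simps)
    also have "\<dots> = \<tau> d * v d c"
      by (rule sum_kronecker) (use orthonormal_onD[OF svd_onD(3)[OF S]] d in auto)
    finally show ?thesis .
  qed
  moreover have "mat_vec I (\<lambda>c r. W r c) (u d) c = (\<Sum>p\<in>P. inner_on I (a p) (u d) * b p c)"
    unfolding mat_vec_def using W[OF _ c]
    by (simp add: inner_on_def sum_distrib_left sum_distrib_right sum.swap[of _ I] algebra_simps)
  ultimately have "v d c * \<tau> d = (\<Sum>p\<in>P. inner_on I (a p) (u d) * b p c)" by simp
  then show "v d c = (\<Sum>p\<in>P. (inner_on I (a p) (u d) / \<tau> d) * b p c)"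
    using d by (simp add: times_divide_eq_left sum_divide_distrib[symmetric] eq_divide_eq)
qed

lemma tail_le_weighted_sum:
  fixes h w :: "nat \<Rightarrow> real"
  assumes hdec: "\<And>d. d \<in> {1..<k} \<Longrightarrow> h (Suc d) \<le> h d"
    and h0: "\<And>d. d \<in> {1..k} \<Longrightarrow> h d \<ge> 0"
    and w: "\<And>d. d \<in> {1..k} \<Longrightarrow> 0 \<le> w d \<and> w d \<le> 1"
    and ws: "(\<Sum>d\<in>{1..k}. w d) \<le> real R"
  shows "(\<Sum>d\<in>{Suc R..k}. h d) \<le> (\<Sum>d\<in>{1..k}. h d * (1 - w d))"
proof (cases "R < k \<and> R \<noteq> 0")
  case False
  then consider "R \<ge> k" | "R = 0" by linarith
  then show ?thesis
  proof cases
    case 1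
    then show ?thesis using h0 w by (auto intro!: sum_nonneg mult_nonneg_nonneg)
  next
    case 2
    have "(\<Sum>d\<in>{1..k}. w d) = 0" using ws w 2 by (intro antisym) (auto intro: sum_nonneg)
    then have "\<forall>d\<in>{1..k}. w d = 0" using w by (subst (asm) sum_nonneg_eq_0_iff) auto
    then show ?thesis using 2 by simp
  qed
next
  case True
  have mono: "h e \<le> h d" if "1 \<le> d" "d \<le> e" "e \<le> k" for d e
    using that(2,3)
  proof (induction e rule: dec_induct)
    case (step e)
    then show ?case using hdec[of e] that(1) by auto
  qed simp
  have split: "sum g {1..k} = sum g {1..R} + sum g {Suc R..k}" for g :: "nat \<Rightarrow> real"
    using True by (subst sum.union_disjoint[symmetric]) (auto intro: sum.cong)
  have "(\<Sum>d\<in>{Suc R..k}. h d) = (\<Sum>d\<in>{Suc R..k}. h d * (1 - w d)) + (\<Sum>d\<in>{Suc R..k}. h d * w d)"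
    by (simp add: algebra_simps sum.distrib[symmetric])
  also have "(\<Sum>d\<in>{Suc R..k}. h d * w d) \<le> h R * (\<Sum>d\<in>{Suc R..k}. w d)"
    unfolding sum_distrib_left by (rule sum_mono) (use mono[of R] w True in \<open>auto intro!: mult_right_mono\<close>)
  also have "\<dots> \<le> h R * (\<Sum>d\<in>{1..R}. 1 - w d)"
    using ws h0[of R] True split[of w] by (intro mult_left_mono) (auto simp: sum_subtractf)
  also have "\<dots> \<le> (\<Sum>d\<in>{1..R}. h d * (1 - w d))"
    unfolding sum_distrib_left by (rule sum_mono) (use mono[of _ R] w True in \<open>auto intro!: mult_right_mono\<close>)
  finally show ?thesis using split[of "\<lambda>d. h d * (1 - w d)"] by linarith
qed

text \<open>The weight \<open>1 - \<Sum>\<^sub>d \<langle>v e, b d\<rangle>\<^sup>2\<close> is the squared norm of the part of the right singular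
  vector \<open>v e\<close> orthogonal to the row space of \<open>W\<close>.\<close>

lemma approx_error_ge:
  assumes S: "svd_on I J M k \<sigma> u v" and T: "finite T" and O: "orthonormal_on J T b"
    and W: "\<And>r c. r \<in> I \<Longrightarrow> c \<in> J \<Longrightarrow> W r c = (\<Sum>d\<in>T. \<alpha> d r * b d c)"
  shows "(\<Sum>r\<in>I. \<Sum>c\<in>J. (M r c - W r c)^2)
           \<ge> (\<Sum>e\<in>{1..k}. (\<sigma> e)^2 * (1 - (\<Sum>d\<in>T. (inner_on J (v e) (b d))^2)))"
proof -
  have row: "(\<Sum>c\<in>J. (M r c - W r c)^2) \<ge> (\<Sum>c\<in>J. (M r c)^2) - (\<Sum>d\<in>T. (inner_on J (M r) (b d))^2)"
    if r: "r \<in> I" for r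
  proof -
    have "(\<Sum>c\<in>J. (M r c - W r c)^2)
        = inner_on J (\<lambda>c. M r c - (\<Sum>d\<in>T. \<alpha> d r * b d c)) (\<lambda>c. M r c - (\<Sum>d\<in>T. \<alpha> d r * b d c))"
      unfolding inner_on_def power2_eq_square by (rule sum.cong) (use W r in auto)
    then show ?thesis
      using norm_sq_residual_ge[OF T O, of "M r"] by (simp add: inner_on_def power2_eq_square)
  qed
  have "(\<Sum>r\<in>I. \<Sum>c\<in>J. (M r c - W r c)^2)
      \<ge> (\<Sum>r\<in>I. \<Sum>c\<in>J. (M r c)^2) - (\<Sum>d\<in>T. \<Sum>r\<in>I. (inner_on J (M r) (b d))^2)"
    using sum_mono[of I, OF row] by (simp add: sum_subtractf sum.swap[of _ T])
  also have "(\<Sum>d\<in>T. \<Sum>r\<in>I. (inner_on J (M r) (b d))^2)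
      = (\<Sum>e\<in>{1..k}. (\<sigma> e)^2 * (\<Sum>d\<in>T. (inner_on J (v e) (b d))^2))"
    using svd_mat_vec_norm[OF S] by (simp add: inner_on_def sum_distrib_left sum.swap[of _ T])
  finally show ?thesis using svd_frobenius[OF S] by (simp add: right_diff_distrib sum_subtractf)
qed

lemma svd_tail_le_approx_error:
  assumes I: "finite I" and J: "finite J" and P: "finite P" and PR: "card P \<le> R"
    and S: "svd_on I J M k \<sigma> u v" and k: "k = min (card I) (card J)"
    and W: "\<And>r c. r \<in> I \<Longrightarrow> c \<in> J \<Longrightarrow> W r c = (\<Sum>p\<in>P. a p r * b p c)"
  shows "(\<Sum>e\<in>{Suc R..k}. (\<sigma> e)^2) \<le> (\<Sum>r\<in>I. \<Sum>c\<in>J. (M r c - W r c)^2)"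
proof -
  obtain \<tau> a' b' where SW: "svd_on I J W k \<tau> a' b'" using svd_exists[OF I J, of W] k by auto
  define T where "T = {d\<in>{1..k}. \<tau> d \<noteq> 0}"
  have T: "finite T" by (simp add: T_def)
  have cT: "card T \<le> R" using card_nonzero_singular_values_le[OF I J P W SW] PR by (simp add: T_def)
  have OT: "orthonormal_on J T b'"
    by (rule orthonormal_on_subset[OF svd_onD(4)[OF SW]]) (auto simp: T_def)
  have W_T: "W r c = (\<Sum>d\<in>T. (\<tau> d * a' d r) * b' d c)" if "r \<in> I" "c \<in> J" for r c
    unfolding svd_onD(5)[OF SW that] T_def by (rule sum.mono_neutral_right) auto
  define w where "w e = (\<Sum>d\<in>T. (inner_on J (v e) (b' d))^2)" for e
  have w01: "0 \<le> w e \<and> w e \<le> 1" if e: "e \<in> {1..k}" for e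
    using bessel_inequality[OF T OT, of "v e"] orthonormal_onD[OF svd_onD(4)[OF S] e e]
    by (simp add: w_def sum_nonneg)
  have "(\<Sum>e\<in>{1..k}. w e) = (\<Sum>d\<in>T. \<Sum>e\<in>{1..k}. (inner_on J (b' d) (v e))^2)"
    unfolding w_def by (subst sum.swap) (simp add: inner_on_commute)
  also have "\<dots> \<le> (\<Sum>d\<in>T. inner_on J (b' d) (b' d))"
    by (intro sum_mono bessel_inequality svd_onD(4)[OF S]) simp
  also have "\<dots> = card T" using orthonormal_onD[OF OT] by simp
  finally have wsum: "(\<Sum>e\<in>{1..k}. w e) \<le> real R" using cT by linarith
  have "(\<Sum>e\<in>{Suc R..k}. (\<sigma> e)^2) \<le> (\<Sum>e\<in>{1..k}. (\<sigma> e)^2 * (1 - w e))"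
    by (rule tail_le_weighted_sum[OF _ _ w01 wsum])
       (use svd_onD(1,2)[OF S] in \<open>auto intro: power_mono\<close>)
  also have "\<dots> \<le> (\<Sum>r\<in>I. \<Sum>c\<in>J. (M r c - W r c)^2)"
    unfolding w_def by (rule approx_error_ge[OF S T OT W_T])
  finally show ?thesis .
qed

section \<open>Entropy inequalities\<close>

lemma entropy_le_mass_ln_card:
  fixes p :: "'a \<Rightarrow> real"
  assumes S: "finite S" and p0: "\<And>d. d \<in> S \<Longrightarrow> p d \<ge> 0"
  shows "- (\<Sum>d\<in>S. p d * ln (p d)) \<le> (\<Sum>d\<in>S. p d) * ln (real (card S)) - (\<Sum>d\<in>S. p d) * ln (\<Sum>d\<in>S. p d)"
proof (cases "(\<Sum>d\<in>S. p d) = 0")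
  case True
  then have "\<forall>d\<in>S. p d = 0" using sum_nonneg_eq_0_iff[OF S] p0 by blast
  then show ?thesis by simp
next
  case False
  define P where "P = (\<Sum>d\<in>S. p d)"
  have P0: "P > 0" using False p0 sum_nonneg[of S p] by (simp add: P_def less_le)
  have Sne: "S \<noteq> {}" using False by auto
  then have cS: "card S > 0" using S by (simp add: card_gt_0_iff)
  define q where "q = P / real (card S)"
  have q0: "q > 0" using P0 cS by (simp add: q_def)
  have key: "p d * ln q - p d * ln (p d) \<le> q - p d" if d: "d \<in> S" for d
  proof (cases "p d = 0")
    case True then show ?thesis using q0 by simp
  next
    case False
    then have pd: "p d > 0" using p0[OF d] by simp
    have "ln (q / p d) \<le> q / p d - 1" by (rule ln_le_minus_one) (use pd q0 in simp)
    then have "p d * ln (q / p d) \<le> p d * (q / p d - 1)" using pd by (simp add: mult_left_mono)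
    then show ?thesis using pd q0 by (simp add: ln_div right_diff_distrib)
  qed
  have "(\<Sum>d\<in>S. p d * ln q - p d * ln (p d)) \<le> (\<Sum>d\<in>S. q - p d)"
    by (rule sum_mono) (use key in auto)
  also have "\<dots> = 0" using cS by (simp add: sum_subtractf q_def P_def)
  finally have "P * ln q - (\<Sum>d\<in>S. p d * ln (p d)) \<le> 0"
    by (simp add: sum_subtractf sum_distrib_right[symmetric] P_def)
  moreover have "ln q = ln P - ln (real (card S))" using P0 cS by (simp add: q_def ln_div)
  ultimately show ?thesis by (simp add: P_def algebra_simps)
qed

lemma neg_mult_ln_le_two_sqrt:
  fixes t :: real assumes "0 \<le> t" shows "- (t * ln t) \<le> 2 * sqrt t"
proof (cases "t = 0")
  case False
  then have t: "t > 0" using assms by simp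
  have "ln (1 / sqrt t) \<le> 1 / sqrt t - 1" by (rule ln_le_minus_one) (use t in simp)
  moreover have "ln t = 2 * ln (sqrt t)" using ln_sqrt[of t] t by simp
  ultimately have "- ln t \<le> 2 / sqrt t" using t by (simp add: ln_div)
  then have "t * (- ln t) \<le> t * (2 / sqrt t)" using t by (intro mult_left_mono) auto
  also have "t * (2 / sqrt t) = 2 * (t / sqrt t)" by simp
  also have "\<dots> = 2 * sqrt t" using t by (simp add: real_div_sqrt)
  finally show ?thesis by simp
qed simp

lemma neg_one_minus_mult_ln_le:
  fixes t :: real assumes "0 \<le> t" "t < 1" shows "- ((1 - t) * ln (1 - t)) \<le> t"
proof -
  have "ln (1 / (1 - t)) \<le> 1 / (1 - t) - 1" by (rule ln_le_minus_one) (use assms in simp)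
  then have "- ln (1 - t) \<le> t / (1 - t)" using assms by (simp add: ln_div field_simps)
  then have "(1 - t) * (- ln (1 - t)) \<le> (1 - t) * (t / (1 - t))" using assms by (intro mult_left_mono) auto
  then show ?thesis using assms by simp
qed

lemma entropy_head_le:
  fixes p :: "'a \<Rightarrow> real"
  assumes "finite H" "\<And>d. d \<in> H \<Longrightarrow> p d \<ge> 0" "(\<Sum>d\<in>H. p d) = 1 - t" "0 \<le> t" "t < 1"
  shows "- (\<Sum>d\<in>H. p d * ln (p d)) \<le> ln (card H) + t"
proof -
  have "0 \<le> ln (real (card H))" by (cases "card H = 0") auto
  then have "(1 - t) * ln (card H) \<le> ln (card H)"
    using assms(4,5) by (intro mult_left_le_one_le) auto
  moreover have "- (\<Sum>d\<in>H. p d * ln (p d)) \<le> (\<Sum>d\<in>H. p d) * ln (card H) - (\<Sum>d\<in>H. p d) * ln (\<Sum>d\<in>H. p d)"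
    by (rule entropy_le_mass_ln_card) (use assms in auto)
  ultimately show ?thesis
    using neg_one_minus_mult_ln_le[OF assms(4,5)] assms(3) by simp
qed

lemma entropy_tail_le:
  fixes p :: "'a \<Rightarrow> real"
  assumes "finite T" "\<And>d. d \<in> T \<Longrightarrow> p d \<ge> 0"
  shows "- (\<Sum>d\<in>T. p d * ln (p d)) \<le> (\<Sum>d\<in>T. p d) * ln (card T) + 2 * sqrt (\<Sum>d\<in>T. p d)"
  using entropy_le_mass_ln_card[of T p, OF assms] neg_mult_ln_le_two_sqrt[of "\<Sum>d\<in>T. p d"] assms(2)
  by (simp add: sum_nonneg)

text \<open>The \<open>R\<close> leading weights carry entropy at most \<open>ln R\<close>; a tail of mass \<open>t \<le> x\<^sup>2/4\<close> adds
  at most \<open>t ln k + 2 \<surd>t\<close>, and mixing head and tail at most \<open>t\<close> more.\<close>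

lemma entropy_le_of_tail_mass:
  fixes p :: "nat \<Rightarrow> real" and k R :: nat and x :: real
  assumes p0: "\<And>d. d \<in> {1..k} \<Longrightarrow> p d \<ge> 0" and p1: "(\<Sum>d\<in>{1..k}. p d) = 1"
    and tail: "(\<Sum>d\<in>{Suc R..k}. p d) \<le> x^2 / 4"
    and x0: "0 \<le> x" and x1: "x \<le> 1/2" and R1: "R \<ge> 1"
  shows "- (\<Sum>d\<in>{1..k}. p d * ln (p d)) \<le> ln (real R) + x * ln (real k) + 2 * sqrt x"
proof -
  define t where "t = (\<Sum>d\<in>{Suc R..k}. p d)"
  have split: "sum f {1..k} = sum f {1..min R k} + sum f {Suc R..k}" for f :: "nat \<Rightarrow> real"
    by (subst sum.union_disjoint[symmetric]) (auto intro: sum.cong)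
  have t0: "t \<ge> 0" unfolding t_def by (rule sum_nonneg) (use p0 in auto)
  have x2: "x^2 \<le> x" using x0 x1 mult_left_le_one_le[of x x] by (simp add: power2_eq_square)
  have tx: "t \<le> x" "t < 1" using tail x2 x0 x1 unfolding t_def by linarith+
  have "- (\<Sum>d\<in>{1..min R k}. p d * ln (p d)) \<le> ln (card {1..min R k}) + t"
    using p0 p1 split[of p] t0 tx by (intro entropy_head_le) (simp_all add: t_def)
  also have "ln (card {1..min R k}) \<le> ln R"
    using R1 by (cases "k = 0") auto
  finally have head: "- (\<Sum>d\<in>{1..min R k}. p d * ln (p d)) \<le> ln R + t" by simp
  have "0 \<le> ln (real k)" by (cases "k = 0") auto
  then have "t * ln (card {Suc R..k}) \<le> x * ln k"
    using t0 tx x0 by (cases "k \<le> R") (auto intro!: mult_mono)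
  then have tail': "- (\<Sum>d\<in>{Suc R..k}. p d * ln (p d)) \<le> x * ln k + 2 * sqrt t"
    using entropy_tail_le[of "{Suc R..k}" p] p0 unfolding t_def by fastforce
  have "sqrt t \<le> sqrt (x^2/4)" using tail by (simp add: t_def)
  also have "sqrt (x^2/4) = x / 2" using x0 by (simp add: real_sqrt_divide)
  finally have "2 * sqrt t + t \<le> 2 * sqrt x"
    using tx x2 x0 x1 real_le_rsqrt[OF x2] by linarith
  then show ?thesis using split[of "\<lambda>d. p d * ln (p d)"] head tail' by linarith
qed

lemma entropy_ge_ln_of_le_inverse:
  fixes p :: "'a \<Rightarrow> real"
  assumes p0: "\<And>d. d \<in> S \<Longrightarrow> p d \<ge> 0" and p1: "(\<Sum>d\<in>S. p d) = 1"
    and pT: "\<And>d. d \<in> S \<Longrightarrow> p d \<le> 1 / T" and T: "T > 0"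
  shows "- (\<Sum>d\<in>S. p d * ln (p d)) \<ge> ln T"
proof -
  have "p d * ln T \<le> - (p d * ln (p d))" if d: "d \<in> S" for d
  proof (cases "p d = 0")
    case True then show ?thesis by simp
  next
    case False
    then have pd: "p d > 0" using p0[OF d] by simp
    have "ln (p d) \<le> ln (1 / T)" using pd pT[OF d] T by simp
    then have "ln (p d) \<le> - ln T" using T by (simp add: ln_div)
    then have "p d * ln (p d) \<le> p d * (- ln T)" using pd by (intro mult_left_mono) auto
    then show ?thesis by simp
  qed
  then have "(\<Sum>d\<in>S. p d * ln T) \<le> (\<Sum>d\<in>S. - (p d * ln (p d)))" by (rule sum_mono)
  then show ?thesis using p1 by (simp add: sum_distrib_right[symmetric] sum_negf)
qed

section \<open>Matricization of tensors\<close>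

lemma finite_rowidx: "finite K \<Longrightarrow> finite (rowidx D K)"
  unfolding rowidx_def by (simp add: finite_PiE)

lemma DK_eq_min_card: "finite K \<Longrightarrow> DK N D K = min (card (rowidx D K)) (card (rowidx D ({1..N} - K)))"
  unfolding DK_def rowidx_def by (simp add: card_PiE)

lemma merge_idx_in_tidx:
  assumes "K \<subseteq> {1..N}" "r \<in> rowidx D K" "c \<in> rowidx D ({1..N} - K)"
  shows "merge_idx K r c \<in> tidx N D"
  using assms unfolding tidx_def rowidx_def merge_idx_def by (auto simp: PiE_iff extensional_def)

lemma sum_tidx_merge_idx:
  assumes K: "K \<subseteq> {1..N}"
  shows "(\<Sum>i\<in>tidx N D. f i) = (\<Sum>r\<in>rowidx D K. \<Sum>c\<in>rowidx D ({1..N} - K). f (merge_idx K r c))"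
proof -
  let ?I = "rowidx D K" and ?J = "rowidx D ({1..N} - K)"
  have "bij_betw (\<lambda>(r, c). merge_idx K r c) (?I \<times> ?J) (tidx N D)"
  proof (rule bij_betw_byWitness[where f' = "\<lambda>i. (restrict i K, restrict i ({1..N} - K))"])
    show "\<forall>a\<in>?I \<times> ?J. (\<lambda>i. (restrict i K, restrict i ({1..N} - K))) ((\<lambda>(r, c). merge_idx K r c) a) = a"
      using K by (auto simp: rowidx_def merge_idx_def PiE_iff fun_eq_iff restrict_def)
    show "\<forall>a'\<in>tidx N D. (\<lambda>(r, c). merge_idx K r c) ((\<lambda>i. (restrict i K, restrict i ({1..N} - K))) a') = a'"
      using K by (auto simp: tidx_def merge_idx_def PiE_iff fun_eq_iff restrict_def)
    show "(\<lambda>(r, c). merge_idx K r c) ` (?I \<times> ?J) \<subseteq> tidx N D"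
      using merge_idx_in_tidx[OF K] by auto
    show "(\<lambda>i. (restrict i K, restrict i ({1..N} - K))) ` tidx N D \<subseteq> ?I \<times> ?J"
      using K by (auto simp: tidx_def rowidx_def PiE_iff extensional_def split: if_splits)
  qed
  then show ?thesis
    by (simp add: sum.reindex_bij_betw[symmetric] sum.cartesian_product case_prod_unfold)
qed

lemma fnorm_sq_matricize:
  assumes "K \<subseteq> {1..N}"
  shows "(fnorm N D A)^2 = (\<Sum>r\<in>rowidx D K. \<Sum>c\<in>rowidx D ({1..N} - K). (matricize K A r c)^2)"
  using sum_tidx_merge_idx[OF assms, of "\<lambda>i. (A i)^2"]
  unfolding fnorm_def matricize_def by (simp add: sum_nonneg)

lemma is_singvals_iff_svd_on:
  "is_singvals N D K A \<sigma> \<longleftrightarrow>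
     (\<exists>u v. svd_on (rowidx D K) (rowidx D ({1..N} - K)) (matricize K A) (DK N D K) \<sigma> u v)"
  unfolding is_singvals_def svd_on_def orthonormal_on_def inner_on_def by blast

lemma svd_on_singvals:
  assumes K: "K \<subseteq> {1..N}"
  obtains u v where
    "svd_on (rowidx D K) (rowidx D ({1..N} - K)) (matricize K A) (DK N D K) (singvals N D K A) u v"
proof -
  have fK: "finite K" using K finite_subset by blast
  have "\<exists>\<sigma>. is_singvals N D K A \<sigma>"
    unfolding is_singvals_iff_svd_on DK_eq_min_card[OF fK]
    using svd_exists[OF finite_rowidx[OF fK] finite_rowidx[of "{1..N} - K"]] by auto
  then have "is_singvals N D K A (singvals N D K A)"
    unfolding singvals_def by (rule someI_ex)
  then show ?thesis using that unfolding is_singvals_iff_svd_on by blast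
qed

lemma sum_singvals_sq:
  assumes "K \<subseteq> {1..N}"
  shows "(\<Sum>d\<in>{1..DK N D K}. (singvals N D K A d)^2) = (fnorm N D A)^2"
  using svd_frobenius svd_on_singvals[OF assms] fnorm_sq_matricize[OF assms] by metis

lemma QE_nonneg: "QE N D A K \<ge> 0"
proof -
  define \<sigma> where "\<sigma> = singvals N D K A"
  define s where "s = (\<Sum>d\<in>{1..DK N D K}. (\<sigma> d)^2)"
  have "ln 1 \<le> - (\<Sum>d\<in>{1..DK N D K}. (\<sigma> d)^2 / s * ln ((\<sigma> d)^2 / s))" if "s \<noteq> 0"
  proof (rule entropy_ge_ln_of_le_inverse)
    have "s \<ge> 0" unfolding s_def by (simp add: sum_nonneg)
    then show "\<And>d. 0 \<le> (\<sigma> d)^2 / s" by simp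
    show "(\<Sum>d\<in>{1..DK N D K}. (\<sigma> d)^2 / s) = 1"
      using that by (simp add: s_def sum_divide_distrib[symmetric])
    fix d assume "d \<in> {1..DK N D K}"
    then have "(\<sigma> d)^2 \<le> s" unfolding s_def by (intro member_le_sum) auto
    then show "(\<sigma> d)^2 / s \<le> 1 / 1" using that \<open>s \<ge> 0\<close> by (simp add: divide_le_eq_1)
  qed simp
  then show ?thesis unfolding QE_def Let_def \<sigma>_def[symmetric] s_def[symmetric] by simp
qed

section \<open>Matricizations of the tensor network have rank at most \<open>R\<close>\<close>

definition leaf_block :: "nat \<Rightarrow> nat \<Rightarrow> nat set" where
  "leaf_block h n = {2^h * (n - 1) + 1 .. 2^h * n}"

lemma canonical_eq_leaf_blocks:
  "canonical L = {leaf_block (L - l) n | l n. l \<le> L \<and> n \<in> {1..2^l}}"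
  unfolding canonical_def leaf_block_def by blast

lemma leaf_block_children:
  assumes "n \<ge> 1"
  shows "leaf_block h (2*n - 1) \<union> leaf_block h (2*n) = leaf_block (Suc h) n"
    and "leaf_block h (2*n - 1) \<inter> leaf_block h (2*n) = {}"
proof -
  obtain m where n: "n = Suc m" using assms by (cases n) auto
  define q :: nat where "q = 2^h"
  have "leaf_block h (2*n - 1) = {q*(2*m)+1 .. q*(2*m+1)}" "leaf_block h (2*n) = {q*(2*m+1)+1 .. q*(2*m+2)}"
    "leaf_block (Suc h) n = {q*(2*m)+1 .. q*(2*m+2)}"
    by (simp_all add: leaf_block_def q_def n algebra_simps)
  moreover have "q*(2*m) \<le> q*(2*m+1)" "q*(2*m+1) \<le> q*(2*m+2)" by simp_all
  ultimately show "leaf_block h (2*n - 1) \<union> leaf_block h (2*n) = leaf_block (Suc h) n"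
    and "leaf_block h (2*n - 1) \<inter> leaf_block h (2*n) = {}" by auto
qed

lemma leaf_block_subset:
  assumes "1 \<le> n" "n \<le> 2^(L - h)" "h \<le> L"
  shows "leaf_block h n \<subseteq> {1..2^L}"
proof -
  have "2^h * n \<le> 2^h * 2^(L - h)" using assms by simp
  also have "\<dots> = (2::nat)^L" using assms(3) by (simp add: power_add[symmetric])
  finally show ?thesis by (auto simp: leaf_block_def)
qed

lemma canonical_subset:
  assumes "K \<in> canonical L" shows "K \<subseteq> {1..2^L}"
proof -
  from assms obtain l n where "l \<le> L" "n \<in> {1..2^l}" "K = leaf_block (L - l) n"
    unfolding canonical_eq_leaf_blocks by blast
  then show ?thesis using leaf_block_subset[of n L "L - l"] by simp
qed

definition ignores_axes :: "nat \<Rightarrow> nat set \<Rightarrow> tensor \<Rightarrow> bool" where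
  "ignores_axes N B G \<longleftrightarrow> (\<forall>i i'. (\<forall>j\<in>{1..N} - B. i j = i' j) \<longrightarrow> G i = G i')"

lemma ignores_axes_subset: "ignores_axes N B G \<Longrightarrow> B' \<subseteq> B \<Longrightarrow> ignores_axes N B' G"
  unfolding ignores_axes_def by blast

lemma ignores_axes_sum: "(\<And>p. p \<in> P \<Longrightarrow> ignores_axes N B (f p)) \<Longrightarrow> ignores_axes N B (\<lambda>i. \<Sum>p\<in>P. f p i)"
  unfolding ignores_axes_def by (metis (no_types, lifting) sum.cong)

lemma ignores_axes_mult: "ignores_axes N B f \<Longrightarrow> ignores_axes N B g \<Longrightarrow> ignores_axes N B (\<lambda>i. f i * g i)"
  unfolding ignores_axes_def by metis

lemma tn_node_local:
  "n \<ge> 1 \<Longrightarrow> (\<And>j. j \<in> leaf_block h n \<Longrightarrow> i j = i' j) \<Longrightarrow> tn_node \<phi> a R h n r i = tn_node \<phi> a R h n r i'"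
proof (induction h arbitrary: n r)
  case 0
  then have "n \<in> leaf_block 0 n" by (simp add: leaf_block_def)
  then show ?case using 0 by simp
next
  case (Suc h)
  have "2*n - 1 \<ge> 1" "2*n \<ge> 1" using Suc.prems(1) by auto
  moreover note children = leaf_block_children[OF Suc.prems(1), of h]
  ultimately have "tn_node \<phi> a R h (2*n - 1) p i = tn_node \<phi> a R h (2*n - 1) p i'"
    "tn_node \<phi> a R h (2*n) q i = tn_node \<phi> a R h (2*n) q i'" for p q
    by (intro Suc.IH; use Suc.prems(2) in blast)+
  then show ?case by simp
qed

lemma tn_node_ignores_axes:
  "n \<ge> 1 \<Longrightarrow> leaf_block h n \<subseteq> {1..N} - B \<Longrightarrow> ignores_axes N B (tn_node \<phi> a R h n r)"
  unfolding ignores_axes_def by (metis subsetD tn_node_local)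

text \<open>If \<open>W\<close> is contracted from the two children of node \<open>(h + 1, m)\<close> with coefficients ignoring
  the leaves below that node, then \<open>W\<close> factors through the inner edge above either child.\<close>

lemma tn_children_factorization:
  fixes \<phi> :: "nat \<Rightarrow> nat \<Rightarrow> nat \<Rightarrow> real" and a :: "nat \<Rightarrow> nat \<Rightarrow> nat \<Rightarrow> nat \<Rightarrow> nat \<Rightarrow> real"
    and R :: nat and T :: "nat \<Rightarrow> nat \<Rightarrow> nat \<Rightarrow> tensor"
  defines "T \<equiv> tn_node \<phi> a R"
  assumes m: "m \<ge> 1" and block: "leaf_block (Suc h) m \<subseteq> {1..N}"
    and C: "\<And>p q. ignores_axes N (leaf_block (Suc h) m) (C p q)"
    and W: "\<And>i. i \<in> X \<Longrightarrow> W i = (\<Sum>p\<in>{1..R}. \<Sum>q\<in>{1..R}. C p q i * T h (2*m - 1) p i * T h (2*m) q i)"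
    and n: "n = 2*m - 1 \<or> n = 2*m"
  shows "\<exists>G. (\<forall>r. ignores_axes N (leaf_block h n) (G r)) \<and> (\<forall>i\<in>X. W i = (\<Sum>r\<in>{1..R}. T h n r i * G r i))"
proof -
  note children = leaf_block_children[OF m, of h]
  have C': "ignores_axes N (leaf_block h n) (C p q)" for p q
    using ignores_axes_subset[OF C] children n by blast
  have sibling: "ignores_axes N (leaf_block h n) (T h n' q)" if "n' \<in> {2*m - 1, 2*m}" "n' \<noteq> n" for n' q
    unfolding T_def using that children block m n by (intro tn_node_ignores_axes) auto
  from n show ?thesis
  proof
    assume n: "n = 2*m - 1"
    define G where "G p i = (\<Sum>q\<in>{1..R}. C p q i * T h (2*m) q i)" for p i
    have "ignores_axes N (leaf_block h n) (G p)" for p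
      unfolding G_def using C' sibling[of "2*m"] n m by (intro ignores_axes_sum ignores_axes_mult) auto
    moreover have "W i = (\<Sum>p\<in>{1..R}. T h n p i * G p i)" if "i \<in> X" for i
      unfolding W[OF that] G_def n sum_distrib_left by (intro sum.cong refl) (simp add: ac_simps)
    ultimately show ?thesis by blast
  next
    assume n: "n = 2*m"
    define G where "G q i = (\<Sum>p\<in>{1..R}. C p q i * T h (2*m - 1) p i)" for q i
    have "ignores_axes N (leaf_block h n) (G q)" for q
      unfolding G_def using C' sibling[of "2*m - 1"] n m by (intro ignores_axes_sum ignores_axes_mult) auto
    moreover have "W i = (\<Sum>q\<in>{1..R}. T h n q i * G q i)" if "i \<in> X" for i
      unfolding W[OF that] G_def n sum_distrib_left
      by (subst sum.swap) (intro sum.cong refl, simp add: ac_simps)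
    ultimately show ?thesis by blast
  qed
qed

lemma tn_child_factorization:
  fixes \<phi> :: "nat \<Rightarrow> nat \<Rightarrow> nat \<Rightarrow> real" and a :: "nat \<Rightarrow> nat \<Rightarrow> nat \<Rightarrow> nat \<Rightarrow> nat \<Rightarrow> real"
    and R :: nat and T :: "nat \<Rightarrow> nat \<Rightarrow> nat \<Rightarrow> tensor"
  defines "T \<equiv> tn_node \<phi> a R"
  assumes m: "m \<ge> 1" and block: "leaf_block (Suc h) m \<subseteq> {1..N}"
    and G: "\<And>r. ignores_axes N (leaf_block (Suc h) m) (G r)"
    and W: "\<And>i. i \<in> X \<Longrightarrow> W i = (\<Sum>r\<in>{1..R}. T (Suc h) m r i * G r i)"
    and n: "n = 2*m - 1 \<or> n = 2*m"
  shows "\<exists>G'. (\<forall>r. ignores_axes N (leaf_block h n) (G' r)) \<and>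
               (\<forall>i\<in>X. W i = (\<Sum>r\<in>{1..R}. T h n r i * G' r i))"
proof -
  have "W i = (\<Sum>p\<in>{1..R}. \<Sum>q\<in>{1..R}.
                 (\<Sum>r\<in>{1..R}. a (Suc h) m r p q * G r i) * T h (2*m - 1) p i * T h (2*m) q i)"
    if "i \<in> X" for i
  proof -
    have "W i = (\<Sum>r\<in>{1..R}. \<Sum>p\<in>{1..R}. \<Sum>q\<in>{1..R}.
                   a (Suc h) m r p q * T h (2*m - 1) p i * T h (2*m) q i * G r i)"
      unfolding W[OF that] T_def tn_node.simps sum_distrib_right ..
    also have "\<dots> = (\<Sum>p\<in>{1..R}. \<Sum>r\<in>{1..R}. \<Sum>q\<in>{1..R}.
                   a (Suc h) m r p q * T h (2*m - 1) p i * T h (2*m) q i * G r i)"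
      by (rule sum.swap)
    also have "\<dots> = (\<Sum>p\<in>{1..R}. \<Sum>q\<in>{1..R}. \<Sum>r\<in>{1..R}.
                   a (Suc h) m r p q * T h (2*m - 1) p i * T h (2*m) q i * G r i)"
      by (intro sum.cong refl sum.swap)
    finally show ?thesis by (simp add: sum_distrib_left sum_distrib_right ac_simps)
  qed
  moreover have "ignores_axes N (leaf_block (Suc h) m) (\<lambda>i. \<Sum>r\<in>{1..R}. a (Suc h) m r p q * G r i)" for p q
    using G by (intro ignores_axes_sum ignores_axes_mult) (auto simp: ignores_axes_def)
  ultimately show ?thesis
    using m block n unfolding T_def by (intro tn_children_factorization) auto
qed

lemma lctn_node_factorization:
  fixes \<phi> :: "nat \<Rightarrow> nat \<Rightarrow> nat \<Rightarrow> real" and a :: "nat \<Rightarrow> nat \<Rightarrow> nat \<Rightarrow> nat \<Rightarrow> nat \<Rightarrow> real"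
    and R :: nat and T :: "nat \<Rightarrow> nat \<Rightarrow> nat \<Rightarrow> tensor"
  defines "T \<equiv> tn_node \<phi> a R"
  assumes L: "L \<ge> 1"
    and W: "\<And>i. i \<in> X \<Longrightarrow> W i = (\<Sum>p\<in>{1..R}. \<Sum>q\<in>{1..R}. atop p q * T (L-1) 1 p i * T (L-1) 2 q i)"
    and h: "h \<le> L - 1"
  shows "\<forall>n\<in>{1..2^(L-h)}. \<exists>G. (\<forall>r. ignores_axes (2^L) (leaf_block h n) (G r)) \<and>
                                (\<forall>i\<in>X. W i = (\<Sum>r\<in>{1..R}. T h n r i * G r i))"
  using h
proof (induction h rule: inc_induct)
  case base
  show ?case
  proof
    fix n :: nat assume "n \<in> {1..2^(L - (L - 1))}"
    then have "n = 2*1 - 1 \<or> n = 2*1" using L by auto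
    moreover have "leaf_block (Suc (L - 1)) 1 \<subseteq> {1..2^L}" using L by (simp add: leaf_block_def)
    moreover have "ignores_axes (2^L) B (\<lambda>i. atop p q)" for B p q by (simp add: ignores_axes_def)
    ultimately show "\<exists>G. (\<forall>r. ignores_axes (2^L) (leaf_block (L - 1) n) (G r)) \<and>
                         (\<forall>i\<in>X. W i = (\<Sum>r\<in>{1..R}. T (L - 1) n r i * G r i))"
      unfolding T_def
      by (intro tn_children_factorization[where m = 1 and C = "\<lambda>p q i. atop p q"])
         (use W in \<open>simp_all add: T_def\<close>)
  qed
next
  case (step h)
  show ?case
  proof
    fix n :: nat assume n: "n \<in> {1..2^(L-h)}"
    define m where "m = (n + 1) div 2"
    have "L - h = Suc (L - Suc h)" using step.hyps by simp
    then have m: "m \<in> {1..2^(L - Suc h)}" and nm: "n = 2*m - 1 \<or> n = 2*m"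
      using n unfolding m_def by auto
    obtain G where G: "\<And>r. ignores_axes (2^L) (leaf_block (Suc h) m) (G r)"
      and WG: "\<And>i. i \<in> X \<Longrightarrow> W i = (\<Sum>r\<in>{1..R}. T (Suc h) m r i * G r i)"
      using step.IH m by blast
    have "leaf_block (Suc h) m \<subseteq> {1..2^L}"
      using m step.hyps by (intro leaf_block_subset) auto
    then show "\<exists>G. (\<forall>r. ignores_axes (2^L) (leaf_block h n) (G r)) \<and>
                   (\<forall>i\<in>X. W i = (\<Sum>r\<in>{1..R}. T h n r i * G r i))"
      unfolding T_def by (intro tn_child_factorization[where G = G]) (use m nm G WG in \<open>simp_all add: T_def\<close>)
  qed
qed

lemma matricize_sum_of_products:
  assumes K: "K \<subseteq> {1..N}"
    and F: "\<And>p i i'. \<forall>j\<in>K. i j = i' j \<Longrightarrow> F p i = F p i'" and G: "\<And>p. ignores_axes N K (G p)"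
    and W: "\<forall>i\<in>tidx N D. W i = (\<Sum>p\<in>P. F p i * G p i)"
  shows "\<forall>r\<in>rowidx D K. \<forall>c\<in>rowidx D ({1..N} - K).
           W (merge_idx K r c) = (\<Sum>p\<in>P. F p (merge_idx K r (\<lambda>_. 0)) * G p (merge_idx K (\<lambda>_. 0) c))"
proof (intro ballI)
  fix r c assume "r \<in> rowidx D K" "c \<in> rowidx D ({1..N} - K)"
  then have "merge_idx K r c \<in> tidx N D" by (rule merge_idx_in_tidx[OF K])
  moreover have "F p (merge_idx K r c) = F p (merge_idx K r (\<lambda>_. 0))" for p
    by (rule F) (simp add: merge_idx_def)
  moreover have "G p (merge_idx K r c) = G p (merge_idx K (\<lambda>_. 0) c)" for p
    using G[of p] unfolding ignores_axes_def by (auto simp: merge_idx_def)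
  ultimately show "W (merge_idx K r c) = (\<Sum>p\<in>P. F p (merge_idx K r (\<lambda>_. 0)) * G p (merge_idx K (\<lambda>_. 0) c))"
    using W by simp
qed

lemma lctn_matricize_rank_le:
  assumes L: "L > 0" and R: "R > 0" and W: "is_lctn L D R W" and K: "K \<in> canonical L"
  obtains P :: "nat set" and f g where "finite P" "card P \<le> R"
    "\<And>r c. r \<in> rowidx D K \<Longrightarrow> c \<in> rowidx D ({1..2^L} - K) \<Longrightarrow>
       W (merge_idx K r c) = (\<Sum>p\<in>P. f p r * g p c)"
proof -
  from K obtain l n where l: "l \<le> L" "n \<in> {1..2^l}" and K_eq: "K = leaf_block (L - l) n"
    unfolding canonical_eq_leaf_blocks by blast
  show ?thesis
  proof (cases "l = 0")
    case True
    then have "rowidx D ({1..2^L} - K) = {\<lambda>_. undefined}"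
      using l by (simp add: K_eq leaf_block_def rowidx_def)
    then show ?thesis
      using that[of "{1}" "\<lambda>p r. W (merge_idx K r (\<lambda>_. undefined))" "\<lambda>p c. 1"] R by auto
  next
    case False
    from W obtain \<phi> a atop where Wd: "\<forall>i\<in>tidx (2^L) D. W i = (\<Sum>p\<in>{1..R}. \<Sum>q\<in>{1..R}.
                 atop p q * tn_node \<phi> a R (L-1) 1 p i * tn_node \<phi> a R (L-1) 2 q i)"
      unfolding is_lctn_def by blast
    have "L - l \<le> L - 1" "L - (L - l) = l" using l False by auto
    then have "\<forall>n\<in>{1..2^l}. \<exists>G. (\<forall>r. ignores_axes (2^L) (leaf_block (L - l) n) (G r)) \<and>
        (\<forall>i\<in>tidx (2^L) D. W i = (\<Sum>r\<in>{1..R}. tn_node \<phi> a R (L - l) n r i * G r i))"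
      using lctn_node_factorization[where \<phi> = \<phi> and a = a and R = R and atop = atop and W = W
              and X = "tidx (2^L) D" and h = "L - l"] L Wd by auto
    then obtain G where G: "\<And>r. ignores_axes (2^L) K (G r)"
      and WG: "\<forall>i\<in>tidx (2^L) D. W i = (\<Sum>r\<in>{1..R}. tn_node \<phi> a R (L - l) n r i * G r i)"
      using l K_eq by blast
    have "tn_node \<phi> a R (L - l) n p i = tn_node \<phi> a R (L - l) n p i'" if "\<forall>j\<in>K. i j = i' j" for p i i'
      using l that by (intro tn_node_local) (auto simp: K_eq)
    then show ?thesis
      using that[of "{1..R}"] matricize_sum_of_products[OF canonical_subset[OF K] _ G WG] by auto
  qed
qed

section \<open>Entanglement of tensors close to the network\<close>

lemma singvals_tail_le_dist_lctn:
  assumes L: "L > 0" and R: "R > 0" and W: "is_lctn L D R W" and K: "K \<in> canonical L"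
  shows "(\<Sum>e\<in>{Suc R..DK (2^L) D K}. (singvals (2^L) D K A e)^2) \<le> (fnorm (2^L) D (\<lambda>i. W i - A i))^2"
proof -
  have K_subset: "K \<subseteq> {1..2^L}" by (rule canonical_subset[OF K])
  then have fK: "finite K" using finite_subset by blast
  obtain u v where S: "svd_on (rowidx D K) (rowidx D ({1..2^L} - K)) (matricize K A) (DK (2^L) D K)
                            (singvals (2^L) D K A) u v"
    using svd_on_singvals[OF K_subset] by blast
  obtain P :: "nat set" and f g where P: "finite P" "card P \<le> R"
    and Wfg: "\<And>r c. r \<in> rowidx D K \<Longrightarrow> c \<in> rowidx D ({1..2^L} - K) \<Longrightarrow>
                W (merge_idx K r c) = (\<Sum>p\<in>P. f p r * g p c)"
    using lctn_matricize_rank_le[OF L R W K] by blast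
  have "(\<Sum>e\<in>{Suc R..DK (2^L) D K}. (singvals (2^L) D K A e)^2)
      \<le> (\<Sum>r\<in>rowidx D K. \<Sum>c\<in>rowidx D ({1..2^L} - K). (matricize K A r c - W (merge_idx K r c))^2)"
    by (rule svd_tail_le_approx_error[OF finite_rowidx[OF fK]
          finite_rowidx[OF finite_Diff[OF finite_atLeastAtMost]] P S DK_eq_min_card[OF fK] Wfg])
  also have "\<dots> = (fnorm (2^L) D (\<lambda>i. W i - A i))^2"
    unfolding fnorm_sq_matricize[OF K_subset] by (simp add: matricize_def power2_commute)
  finally show ?thesis .
qed

lemma QE_le_of_close_to_lctn:
  assumes L: "L > 0" and R: "R > 0" and W: "is_lctn L D R W"
    and \<epsilon>0: "0 \<le> \<epsilon>" and \<epsilon>A: "\<epsilon> \<le> fnorm (2^L) D A / 4"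
    and WA: "fnorm (2^L) D (\<lambda>i. W i - A i) \<le> \<epsilon>" and K: "K \<in> canonical L"
  defines "x \<equiv> 2 * \<epsilon> / fnorm (2^L) D A"
  shows "QE (2^L) D A K \<le> ln (real R) + x * ln (real (DK (2^L) D K)) + 2 * sqrt x"
proof -
  define \<sigma> where "\<sigma> = singvals (2^L) D K A"
  define k where "k = DK (2^L) D K"
  define s where "s = (\<Sum>d\<in>{1..k}. (\<sigma> d)^2)"
  have K_subset: "K \<subseteq> {1..2^L}" by (rule canonical_subset[OF K])
  have s: "s = (fnorm (2^L) D A)^2"
    unfolding s_def \<sigma>_def k_def by (rule sum_singvals_sq[OF K_subset])
  show ?thesis
  proof (cases "s = 0")
    case True
    then have "QE (2^L) D A K = 0" by (simp add: QE_def Let_def s_def \<sigma>_def k_def)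
    moreover have "fnorm (2^L) D A = 0" using True s by simp
    ultimately show ?thesis using R by (simp add: x_def)
  next
    case False
    have "fnorm (2^L) D A \<ge> 0" by (simp add: fnorm_def sum_nonneg)
    then have nA: "fnorm (2^L) D A > 0" using False s by (auto simp: less_le)
    have x: "0 \<le> x" "x \<le> 1/2" using \<epsilon>0 \<epsilon>A nA by (simp_all add: x_def field_simps)
    have "(fnorm (2^L) D (\<lambda>i. W i - A i))^2 \<le> \<epsilon>^2"
      using WA by (intro power_mono) (simp_all add: fnorm_def sum_nonneg)
    then have "(\<Sum>e\<in>{Suc R..k}. (\<sigma> e)^2) \<le> \<epsilon>^2"
      using singvals_tail_le_dist_lctn[OF L R W K, of A] by (simp add: \<sigma>_def k_def)
    then have "(\<Sum>e\<in>{Suc R..k}. (\<sigma> e)^2 / s) \<le> x^2 / 4"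
      using nA by (simp add: sum_divide_distrib[symmetric] s x_def divide_right_mono power_divide)
    then have "- (\<Sum>d\<in>{1..k}. (\<sigma> d)^2 / s * ln ((\<sigma> d)^2 / s)) \<le> ln (real R) + x * ln (real k) + 2 * sqrt x"
      using False x R s by (intro entropy_le_of_tail_mass) (simp_all add: s_def sum_divide_distrib[symmetric])
    then show ?thesis
      unfolding QE_def Let_def \<sigma>_def[symmetric] k_def[symmetric] s_def[symmetric] using False by simp
  qed
qed

section \<open>A tensor with high entanglement across every canonical partition\<close>

text \<open>When every column has at most one nonzero entry, the rows have disjoint supports, so
  \<open>\<parallel>M y\<parallel>\<^sup>2 \<le> (max\<^sub>r \<parallel>M\<^sub>r\<parallel>\<^sup>2) \<parallel>y\<parallel>\<^sup>2\<close> by Cauchy--Schwarz on each row.\<close>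

lemma norm_sq_mat_vec_le_of_sparse_columns:
  assumes I: "finite I" and B0: "B \<ge> 0"
    and U: "\<And>c r r'. c \<in> J \<Longrightarrow> r \<in> I \<Longrightarrow> r' \<in> I \<Longrightarrow> M r c \<noteq> 0 \<Longrightarrow> M r' c \<noteq> 0 \<Longrightarrow> r = r'"
    and RB: "\<And>r. r \<in> I \<Longrightarrow> (\<Sum>c\<in>J. (M r c)^2) \<le> B"
  shows "(\<Sum>r\<in>I. (mat_vec J M y r)^2) \<le> B * inner_on J y y"
proof -
  define ind where "ind = (\<lambda>r c. if M r c \<noteq> 0 then 1 else (0::real))"
  have row: "(mat_vec J M y r)^2 \<le> B * (\<Sum>c\<in>J. ind r c * (y c)^2)" if r: "r \<in> I" for r
  proof -
    have "mat_vec J M y r = (\<Sum>c\<in>J. M r c * (ind r c * y c))"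
      unfolding mat_vec_def ind_def by (rule sum.cong) auto
    then have "(mat_vec J M y r)^2 \<le> (\<Sum>c\<in>J. (M r c)^2) * (\<Sum>c\<in>J. (ind r c * y c)^2)"
      using Cauchy_Schwarz_ineq_sum[of "\<lambda>c. M r c" "\<lambda>c. ind r c * y c" J] by simp
    also have "(\<Sum>c\<in>J. (ind r c * y c)^2) = (\<Sum>c\<in>J. ind r c * (y c)^2)"
      by (rule sum.cong) (auto simp: ind_def power2_eq_square)
    also have "(\<Sum>c\<in>J. (M r c)^2) * (\<Sum>c\<in>J. ind r c * (y c)^2) \<le> B * (\<Sum>c\<in>J. ind r c * (y c)^2)"
      by (rule mult_right_mono[OF RB[OF r]]) (auto simp: ind_def intro!: sum_nonneg)
    finally show ?thesis .
  qed
  have col: "(\<Sum>r\<in>I. ind r c) * (y c)^2 \<le> (y c)^2" if c: "c \<in> J" for c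
  proof -
    have "(\<Sum>r\<in>I. ind r c) = real (card {r\<in>I. M r c \<noteq> 0})"
      unfolding ind_def using I by (simp add: sum.If_cases Int_def conj_commute)
    also have "card {r\<in>I. M r c \<noteq> 0} \<le> Suc 0"
      using I U[OF c] by (subst card_le_Suc0_iff_eq) auto
    finally show ?thesis using mult_right_mono[of _ 1 "(y c)^2"] by simp
  qed
  have "(\<Sum>r\<in>I. (mat_vec J M y r)^2) \<le> (\<Sum>r\<in>I. B * (\<Sum>c\<in>J. ind r c * (y c)^2))"
    by (rule sum_mono) (use row in auto)
  also have "\<dots> = B * (\<Sum>c\<in>J. (\<Sum>r\<in>I. ind r c) * (y c)^2)"
    by (simp add: sum_distrib_left[symmetric] sum_distrib_right sum.swap[of _ I])
  also have "\<dots> \<le> B * (\<Sum>c\<in>J. (y c)^2)"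
    by (intro mult_left_mono[OF _ B0] sum_mono col)
  finally show ?thesis by (simp add: inner_on_def power2_eq_square)
qed

lemma bilin_sq_le_of_sparse_columns:
  assumes I: "finite I" and B0: "B \<ge> 0"
    and U: "\<And>c r r'. c \<in> J \<Longrightarrow> r \<in> I \<Longrightarrow> r' \<in> I \<Longrightarrow> M r c \<noteq> 0 \<Longrightarrow> M r' c \<noteq> 0 \<Longrightarrow> r = r'"
    and RB: "\<And>r. r \<in> I \<Longrightarrow> (\<Sum>c\<in>J. (M r c)^2) \<le> B"
  shows "(bilin I J M x y)^2 \<le> B * inner_on I x x * inner_on J y y"
proof -
  have "(bilin I J M x y)^2 \<le> inner_on I x x * (\<Sum>r\<in>I. (mat_vec J M y r)^2)"
    using Cauchy_Schwarz_ineq_sum[of x "mat_vec J M y" I]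
    by (simp add: bilin_mat_vec inner_on_def power2_eq_square)
  also have "\<dots> \<le> inner_on I x x * (B * inner_on J y y)"
    by (intro mult_left_mono norm_sq_mat_vec_le_of_sparse_columns[OF I B0 U RB] inner_on_self_nonneg)
  finally show ?thesis by (simp add: ac_simps)
qed

text \<open>Every squared singular value is at most \<open>B\<close> while they sum to \<open>n B\<close>, so each normalized
  weight is at most \<open>1 / n\<close>.\<close>

lemma svd_entropy_ge_of_sparse_columns:
  assumes I: "finite I" and J: "finite J" and S: "svd_on I J M k \<sigma> u v"
    and col: "\<And>c r r'. c \<in> J \<Longrightarrow> r \<in> I \<Longrightarrow> r' \<in> I \<Longrightarrow> M r c \<noteq> 0 \<Longrightarrow> M r' c \<noteq> 0 \<Longrightarrow> r = r'"
    and row: "\<And>r. r \<in> I \<Longrightarrow> (\<Sum>c\<in>J. (M r c)^2) \<le> B"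
    and total: "(\<Sum>r\<in>I. \<Sum>c\<in>J. (M r c)^2) = n * B" and n: "n > 0" and B: "B > 0"
  defines "s \<equiv> \<Sum>d\<in>{1..k}. (\<sigma> d)^2"
  shows "- (\<Sum>d\<in>{1..k}. (\<sigma> d)^2 / s * ln ((\<sigma> d)^2 / s)) \<ge> ln n"
proof (rule entropy_ge_ln_of_le_inverse[OF _ _ _ n])
  have s: "s = n * B" using svd_frobenius[OF S] total by (simp add: s_def)
  then show "\<And>d. 0 \<le> (\<sigma> d)^2 / s" using n B by simp
  show "(\<Sum>d\<in>{1..k}. (\<sigma> d)^2 / s) = 1"
    using s n B by (simp add: s_def sum_divide_distrib[symmetric])
  fix d assume d: "d \<in> {1..k}"
  have "(bilin I J M (u d) (v d))^2 \<le> B * inner_on I (u d) (u d) * inner_on J (v d) (v d)"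
    by (rule bilin_sq_le_of_sparse_columns[OF I _ col row]) (use B in simp)
  then have "(\<sigma> d)^2 \<le> B"
    using orthonormal_onD[OF svd_onD(3)[OF S] d d] orthonormal_onD[OF svd_onD(4)[OF S] d d]
      svd_bilin_singular_vectors[OF S d] by simp
  then show "(\<sigma> d)^2 / s \<le> 1 / n" using s n B by (simp add: field_simps)
qed

definition pairing_tensor :: "nat \<Rightarrow> (nat \<Rightarrow> nat) \<Rightarrow> nat \<Rightarrow> tensor" where
  "pairing_tensor N \<pi> m = (\<lambda>i. if \<forall>j\<in>{1..N}. i j = i (\<pi> j) \<and> i j < m then 1 else 0)"

locale pairing_partition =
  fixes N :: nat and D :: "nat \<Rightarrow> nat" and K :: "nat set" and \<pi> :: "nat \<Rightarrow> nat" and m :: nat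
  assumes K_subset: "K \<subseteq> {1..N}" and m_pos: "m \<ge> 1" and m_le: "\<And>j. j \<in> {1..N} \<Longrightarrow> m \<le> D j"
    and \<pi>_range: "\<And>j. j \<in> {1..N} \<Longrightarrow> \<pi> j \<in> {1..N}"
    and \<pi>_involution: "\<And>j. j \<in> {1..N} \<Longrightarrow> \<pi> (\<pi> j) = j"
    and \<pi>_K: "\<And>j. j \<in> K \<Longrightarrow> \<pi> j \<notin> K"
begin

abbreviation "I \<equiv> rowidx D K"
abbreviation "J \<equiv> rowidx D ({1..N} - K)"

lemma finite_K: "finite K"
  using K_subset finite_subset by blast

text \<open>The nonzero entries of the matricization: the column repeats the row on \<open>\<pi> ` K\<close> and is
  paired with itself on the remaining axes.\<close>

definition entry :: "(nat \<Rightarrow> nat) \<Rightarrow> (nat \<Rightarrow> nat) \<Rightarrow> bool" where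
  "entry r c \<longleftrightarrow> (\<forall>j\<in>K. r j < m \<and> c (\<pi> j) = r j) \<and>
                   (\<forall>j\<in>{1..N} - K. \<pi> j \<notin> K \<longrightarrow> c j = c (\<pi> j) \<and> c j < m)"

lemma matricize_pairing_tensor:
  "matricize K (pairing_tensor N \<pi> m) r c = (if entry r c then 1 else 0)"
proof -
  have "(\<forall>j\<in>{1..N}. merge_idx K r c j = merge_idx K r c (\<pi> j) \<and> merge_idx K r c j < m) \<longleftrightarrow> entry r c"
  proof
    assume H: "\<forall>j\<in>{1..N}. merge_idx K r c j = merge_idx K r c (\<pi> j) \<and> merge_idx K r c j < m"
    show "entry r c" unfolding entry_def
    proof (intro conjI ballI impI)
      fix j assume j: "j \<in> K"
      then have "merge_idx K r c j = merge_idx K r c (\<pi> j) \<and> merge_idx K r c j < m"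
        using H K_subset by blast
      then show "r j < m" "c (\<pi> j) = r j" using j \<pi>_K[OF j] by (auto simp: merge_idx_def)
    next
      fix j assume j: "j \<in> {1..N} - K" and "\<pi> j \<notin> K"
      moreover have "merge_idx K r c j = merge_idx K r c (\<pi> j) \<and> merge_idx K r c j < m"
        using H j by blast
      ultimately show "c j = c (\<pi> j)" "c j < m" by (auto simp: merge_idx_def)
    qed
  next
    assume E: "entry r c"
    show "\<forall>j\<in>{1..N}. merge_idx K r c j = merge_idx K r c (\<pi> j) \<and> merge_idx K r c j < m"
    proof
      fix j assume j: "j \<in> {1..N}"
      consider "j \<in> K" | "j \<notin> K" "\<pi> j \<in> K" | "j \<notin> K" "\<pi> j \<notin> K" by blast
      then show "merge_idx K r c j = merge_idx K r c (\<pi> j) \<and> merge_idx K r c j < m"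
      proof cases
        case 2
        then have "c (\<pi> (\<pi> j)) = r (\<pi> j)" "r (\<pi> j) < m" using E by (auto simp: entry_def)
        then show ?thesis using 2 \<pi>_involution[OF j] by (simp add: merge_idx_def)
      qed (use E j \<pi>_K in \<open>auto simp: entry_def merge_idx_def\<close>)
    qed
  qed
  then show ?thesis by (simp add: matricize_def pairing_tensor_def)
qed

lemma entry_unique_row: "entry r c \<Longrightarrow> entry r' c \<Longrightarrow> r \<in> I \<Longrightarrow> r' \<in> I \<Longrightarrow> r = r'"
  unfolding entry_def rowidx_def by (metis PiE_ext)

definition row_support :: "(nat \<Rightarrow> nat) \<Rightarrow> (nat \<Rightarrow> nat) set" where
  "row_support r = {c \<in> J. entry r c}"

lemma row_support_empty: "\<not> (\<forall>j\<in>K. r j < m) \<Longrightarrow> row_support r = {}"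
  by (auto simp: row_support_def entry_def)

text \<open>Overwriting a column on \<open>\<pi> ` K\<close> moves it between the supports of any two rows.\<close>

definition retarget :: "(nat \<Rightarrow> nat) \<Rightarrow> (nat \<Rightarrow> nat) \<Rightarrow> nat \<Rightarrow> nat" where
  "retarget r c = (\<lambda>j. if j \<in> \<pi> ` K then r (\<pi> j) else c j)"

lemma \<pi>_image_K: "j \<in> K \<Longrightarrow> \<pi> j \<in> {1..N} - K"
  using \<pi>_range \<pi>_K K_subset by blast

lemma in_\<pi>_image_K_iff: "j \<in> {1..N} \<Longrightarrow> j \<in> \<pi> ` K \<longleftrightarrow> \<pi> j \<in> K"
  using \<pi>_involution K_subset by (metis image_iff subsetD)

lemma retarget_in_row_support:
  assumes r: "r \<in> I" "\<forall>j\<in>K. r j < m" and c: "c \<in> row_support r'"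
  shows "retarget r c \<in> row_support r"
proof -
  have cJ: "c \<in> J" and E: "entry r' c" using c by (auto simp: row_support_def)
  have "retarget r c \<in> J"
    unfolding rowidx_def
  proof (rule PiE_I)
    fix j assume j: "j \<in> {1..N} - K"
    show "retarget r c j \<in> {..<D j}"
    proof (cases "j \<in> \<pi> ` K")
      case True
      then have "r (\<pi> j) < m" using r(2) in_\<pi>_image_K_iff j by blast
      then show ?thesis using True m_le j by (fastforce simp: retarget_def)
    next
      case False then show ?thesis using cJ j by (auto simp: retarget_def rowidx_def PiE_iff)
    qed
  next
    fix j assume "j \<notin> {1..N} - K"
    then show "retarget r c j = undefined"
      using cJ \<pi>_image_K by (auto simp: retarget_def rowidx_def PiE_iff extensional_def)
  qed
  moreover have "entry r (retarget r c)"
    unfolding entry_def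
  proof (intro conjI ballI impI)
    fix j assume j: "j \<in> K"
    then show "r j < m" "retarget r c (\<pi> j) = r j"
      using r(2) \<pi>_involution K_subset by (auto simp: retarget_def)
  next
    fix j assume j: "j \<in> {1..N} - K" and "\<pi> j \<notin> K"
    moreover have "\<pi> j \<notin> \<pi> ` K"
      using j \<pi>_range in_\<pi>_image_K_iff \<pi>_involution by auto
    ultimately show "retarget r c j = retarget r c (\<pi> j)" "retarget r c j < m"
      using E in_\<pi>_image_K_iff by (auto simp: entry_def retarget_def)
  qed
  ultimately show ?thesis by (simp add: row_support_def)
qed

lemma retarget_retarget: "c \<in> row_support r \<Longrightarrow> retarget r (retarget r' c) = c"
  unfolding retarget_def row_support_def entry_def
  using \<pi>_involution K_subset by (fastforce simp: fun_eq_iff)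

lemma card_row_support_eq:
  assumes "r \<in> I" "\<forall>j\<in>K. r j < m" "r' \<in> I" "\<forall>j\<in>K. r' j < m"
  shows "card (row_support r) = card (row_support r')"
  by (rule bij_betw_same_card[of "retarget r'"], rule bij_betw_byWitness[where f' = "retarget r"])
     (use assms retarget_in_row_support retarget_retarget in blast)+

definition zero_row :: "nat \<Rightarrow> nat" where "zero_row = restrict (\<lambda>_. 0) K"

lemma zero_row: "zero_row \<in> I" "\<forall>j\<in>K. zero_row j < m"
  using m_le m_pos K_subset by (fastforce simp: zero_row_def rowidx_def)+

lemma card_row_support_zero_row_pos: "card (row_support zero_row) > 0"
proof -
  have "restrict (\<lambda>_. 0) ({1..N} - K) \<in> row_support zero_row"
    using m_le m_pos \<pi>_image_K \<pi>_range
    by (fastforce simp: row_support_def entry_def rowidx_def zero_row_def)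
  moreover have "finite (row_support zero_row)"
    using finite_rowidx[of "{1..N} - K" D] by (simp add: row_support_def)
  ultimately show ?thesis by (auto simp: card_gt_0_iff)
qed

lemma norm_sq_matricize_row:
  assumes "r \<in> I"
  shows "(\<Sum>c\<in>J. (matricize K (pairing_tensor N \<pi> m) r c)^2)
           = (if \<forall>j\<in>K. r j < m then real (card (row_support zero_row)) else 0)"
proof -
  have "(\<Sum>c\<in>J. (matricize K (pairing_tensor N \<pi> m) r c)^2) = (\<Sum>c\<in>J. if entry r c then 1 else 0)"
    by (intro sum.cong) (auto simp: matricize_pairing_tensor)
  also have "\<dots> = card (row_support r)"
    using finite_rowidx[of "{1..N} - K" D] by (simp add: row_support_def sum.If_cases Int_def conj_commute)
  finally show ?thesis
    using card_row_support_eq[OF assms _ zero_row] row_support_empty by auto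
qed

lemma norm_sq_matricize:
  "(\<Sum>r\<in>I. \<Sum>c\<in>J. (matricize K (pairing_tensor N \<pi> m) r c)^2)
     = real (m ^ card K) * card (row_support zero_row)"
proof -
  have valid_rows: "{r \<in> I. \<forall>j\<in>K. r j < m} = PiE K (\<lambda>_. {..<m})"
    using K_subset by (fastforce simp: rowidx_def PiE_iff extensional_def intro: less_le_trans[OF _ m_le])
  have "(\<Sum>r\<in>I. \<Sum>c\<in>J. (matricize K (pairing_tensor N \<pi> m) r c)^2)
      = (\<Sum>r\<in>I. if \<forall>j\<in>K. r j < m then real (card (row_support zero_row)) else 0)"
    by (rule sum.cong[OF refl norm_sq_matricize_row])
  also have "\<dots> = card {r \<in> I. \<forall>j\<in>K. r j < m} * real (card (row_support zero_row))"
    using finite_rowidx[OF finite_K, of D] by (simp add: sum.If_cases Int_def conj_commute)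
  finally show ?thesis unfolding valid_rows by (simp add: card_PiE finite_K)
qed

lemma QE_pairing_tensor_ge: "QE N D (pairing_tensor N \<pi> m) K \<ge> card K * ln m"
proof -
  obtain u v where S: "svd_on I J (matricize K (pairing_tensor N \<pi> m)) (DK N D K)
                               (singvals N D K (pairing_tensor N \<pi> m)) u v"
    using svd_on_singvals[OF K_subset] by blast
  have "ln (real (m ^ card K)) \<le> QE N D (pairing_tensor N \<pi> m) K"
    using svd_entropy_ge_of_sparse_columns[OF finite_rowidx[OF finite_K] finite_rowidx S _ _ norm_sq_matricize]
      entry_unique_row norm_sq_matricize_row card_row_support_zero_row_pos m_pos svd_frobenius[OF S] norm_sq_matricize
    by (auto simp: matricize_pairing_tensor QE_def Let_def split: if_splits)
  then show ?thesis using m_pos by (simp add: ln_realpow)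
qed

end

lemma canonical_within_half:
  assumes K: "K \<in> canonical L" and "K \<noteq> {1..2^L}"
  shows "K \<subseteq> {1..2^(L-1)} \<or> K \<subseteq> {2^(L-1)+1..2^L}"
proof -
  from K obtain l n where l: "l \<le> L" "n \<in> {1..2^l}" and K_eq: "K = leaf_block (L - l) n"
    unfolding canonical_eq_leaf_blocks by blast
  have "l \<noteq> 0"
  proof
    assume "l = 0"
    then show False using assms(2) l by (simp add: K_eq leaf_block_def)
  qed
  define q :: nat where "q = 2^(L - l)"
  have H: "2^(L-1) = q * 2^(l-1)" "2^L = q * 2^l"
    using l \<open>l \<noteq> 0\<close> by (simp_all add: q_def power_add[symmetric])
  have Kq: "K = {q * (n - 1) + 1 .. q * n}" by (simp add: K_eq leaf_block_def q_def)
  have l2: "(2::nat)^l = 2 * 2^(l-1)" using \<open>l \<noteq> 0\<close> by (cases l) auto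
  show ?thesis
  proof (cases "n \<le> 2^(l-1)")
    case True
    then have "q * n \<le> 2^(L-1)" using H by simp
    then show ?thesis unfolding Kq by auto
  next
    case False
    then have "2^(l-1) \<le> n - 1" "n \<le> 2 * 2^(l-1)" using l l2 by auto
    then have "2^(L-1) \<le> q * (n - 1)" "q * n \<le> 2^L" using H l2 by simp_all
    then show ?thesis unfolding Kq by auto
  qed
qed

text \<open>The witness ties the \<open>j\<close>-th axis of the first half to the \<open>j\<close>-th axis of the second half,
  both restricted to indices below \<open>min D\<^sub>n\<close>.\<close>

definition swap_halves :: "nat \<Rightarrow> nat \<Rightarrow> nat" where
  "swap_halves H j = (if j \<le> H then j + H else j - H)"

lemma QE_pairing_tensor_canonical_ge:
  assumes L: "L > 0" and K: "K \<in> canonical L" "K \<noteq> {1..2^L}"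
    and m_pos: "m \<ge> 1" and m_le: "\<And>j. j \<in> {1..2^L} \<Longrightarrow> m \<le> D j"
  shows "QE (2^L) D (pairing_tensor (2^L) (swap_halves (2^(L-1))) m) K
           \<ge> real (min (card K) (card ({1..2^L} - K))) * ln m"
proof -
  define H :: nat where "H = 2^(L-1)"
  have N: "(2::nat)^L = 2 * H" unfolding H_def using L by (cases L) auto
  have halves: "K \<subseteq> {1..H} \<or> K \<subseteq> {H+1..2*H}" using canonical_within_half[OF K] N H_def by auto
  have \<pi>_K: "swap_halves H j \<notin> K" if "j \<in> K" for j
    using halves
  proof
    assume K1: "K \<subseteq> {1..H}"
    then have "swap_halves H j \<notin> {1..H}" using that by (auto simp: swap_halves_def)
    then show ?thesis using K1 by blast
  next
    assume K2: "K \<subseteq> {H+1..2*H}"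
    then have "swap_halves H j \<notin> {H+1..2*H}" using that by (auto simp: swap_halves_def)
    then show ?thesis using K2 by blast
  qed
  have "swap_halves H j \<in> {1..2^L}" "swap_halves H (swap_halves H j) = j" if "j \<in> {1..2^L}" for j
    using that N by (auto simp: swap_halves_def)
  with canonical_subset[OF K(1)] interpret pairing_partition "2^L" D K "swap_halves H" m
    using m_pos m_le \<pi>_K by unfold_locales blast+
  have "card K \<le> H"
    using halves card_mono[of "{1..H}" K] card_mono[of "{H+1..2*H}" K] by auto
  then have "min (card K) (card ({1..2^L} - K)) = card K"
    using N K_subset by (simp add: card_Diff_subset finite_subset)
  then show ?thesis using QE_pairing_tensor_ge by (simp add: H_def)
qed

lemma exists_tensor_QE_ge:
  assumes L: "L > 0" and D: "\<forall>n\<in>{1..2^L}. D n > 0"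
  shows "\<exists>A'. \<forall>K\<in>canonical L.
           QE (2^L) D A' K \<ge> real (min (card K) (card ({1..2^L} - K))) * ln (real (Min (D ` {1..2^L})))"
proof -
  define m where "m = Min (D ` {1..2^L})"
  have m_le: "m \<le> D j" if "j \<in> {1..2^L}" for j unfolding m_def using that by simp
  have "m \<in> D ` {1..2^L}" unfolding m_def by (rule Min_in) auto
  then have m_pos: "m \<ge> 1" using D by (auto simp: Suc_le_eq)
  have "QE (2^L) D (pairing_tensor (2^L) (swap_halves (2^(L-1))) m) K
          \<ge> real (min (card K) (card ({1..2^L} - K))) * ln m" if K: "K \<in> canonical L" for K
    using QE_pairing_tensor_canonical_ge[OF L K _ m_pos m_le] QE_nonneg by (cases "K = {1..2^L}") auto
  then show ?thesis unfolding m_def by blast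
qed

theorem theorem1:
  fixes L R :: nat and D :: "nat \<Rightarrow> nat" and W A :: tensor and \<epsilon> :: real
  assumes "L > 0"
    and "\<forall>n\<in>{1..2^L}. D n > 0"
    and "R > 0"
    and "is_lctn L D R W"
    and "0 \<le> \<epsilon>" and "\<epsilon> \<le> fnorm (2^L) D A / 4"
    and "fnorm (2^L) D (\<lambda>i. W i - A i) \<le> \<epsilon>"
  shows "(\<forall>K\<in>canonical L.
            QE (2^L) D A K
              \<le> ln (real R)
                 + (if fnorm (2^L) D A = 0 then 0 else 2 * \<epsilon> / fnorm (2^L) D A)
                     * ln (real (DK (2^L) D K))
                 + 2 * sqrt (if fnorm (2^L) D A = 0 then 0 else 2 * \<epsilon> / fnorm (2^L) D A))
         \<and> (\<exists>A' :: tensor. \<forall>K\<in>canonical L.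
              QE (2^L) D A' K
                \<ge> real (min (card K) (card ({1..2^L} - K))) * ln (real (Min (D ` {1..2^L}))))"
proof -
  \<comment> \<open>The case distinction is redundant, since \<open>x / 0 = 0\<close>.\<close>
  have x: "(if fnorm (2^L) D A = 0 then 0 else 2 * \<epsilon> / fnorm (2^L) D A) = 2 * \<epsilon> / fnorm (2^L) D A"
    by simp
  show ?thesis
    unfolding x using QE_le_of_close_to_lctn[OF assms(1,3-7)] exists_tensor_QE_ge[OF assms(1,2)] by blast
qed

end
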